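(* Let the setting and the algorithm RandProx-LC be as in the context, and suppose $\mu_f>0$, $0<\gamma<\frac{2}{L_f}$, $\tau>0$ and $\gamma\tau\big((1-\zeta)\|K\|^2+\omega_{\mathrm{ran}}\big)\le 1$. For $t\ge0$ let $$\Psi^t:=\frac{1}{\gamma}\|x^t-x^\star\|^2+\frac{1+\omega}{\tau}\|u_0^t-u_0^\star\|^2,$$ where $u_0^t:=P_{\mathrm{ran}(K)}(u^t)$ (the unique element of $\mathrm{ran}(K)$ with $v^t=K^*u_0^t$), $x^\star$ is the unique solution of the primal problem and $u_0^\star$ the unique solution in $\mathrm{ran}(K)$ of the dual problem. Then for every $t\ge0$, $\mathbb{E}[\Psi^t]\le c^t\Psi^0$, where $$c:=\max\left((1-\gamma\mu_f)^2,\ (\gamma L_f-1)^2,\ 1-\frac{\gamma\tau\lambda^+_{\min}(KK^* )}{1+\omega}\right)<1.$$ Moreover, $(x^t)$ and $(\hat{x}^t)$ both converge to $x^\star$ and $(u_0^t)$ converges to $u_0^\star$, almost surely.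
   Context: $\mathcal{X},\mathcal{U}$ are finite-dimensional real Hilbert spaces, $K:\mathcal{X}\to\mathcal{U}$ a nonzero linear operator with adjoint $K^*$, $P_{\mathrm{ran}(K)}$ the orthogonal projector onto the range of $K$, and $\lambda^+_{\min}(KK^* )>0$ the smallest nonzero eigenvalue of $KK^*$. $b\in\mathrm{ran}(K)$. $f:\mathcal{X}\to\mathbb{R}$ is convex, $L_f$-smooth ($\nabla f$ $L_f$-Lipschitz) and $\mu_f$-strongly convex ($f-\frac{\mu_f}{2}\|\cdot\|^2$ convex). Primal problem: minimize $f(x)$ subject to $Kx=b$. Dual problem: minimize $f^*(-K^*u)+\langle u,b\rangle$ over $u\in\mathcal{U}$. Algorithm RandProx-LC: inputs $x^0\in\mathcal{X}$, $u^0\in\mathcal{U}$, $\gamma>0$, $\tau>0$, $\omega\ge0$; $v^0:=K^*u^0$; for $t\ge0$: $\hat{x}^t:=x^t-\gamma\nabla f(x^t)-\gamma v^t$; $u^{t+1}:=u^t+\frac{\tau}{1+\omega}\mathcal{R}^t(K\hat{x}^t-b)$; $v^{t+1}:=K^*u^{t+1}$; $x^{t+1}:=\hat{x}^t-\gamma(1+\omega)(v^{t+1}-v^t)$. With $\mathcal{F}_t$ the $\sigma$-algebra generated by $(x^0,u^0),\dots,(x^t,u^t)$ and $r^t:=K\hat{x}^t-b$, the random estimate $\mathcal{R}^t(r^t)$ satisfies $\mathbb{E}[\mathcal{R}^t(r^t)\mid\mathcal{F}_t]=r^t$, $\mathbb{E}[\|\mathcal{R}^t(r^t)-r^t\|^2\mid\mathcal{F}_t]\le\omega\|r^t\|^2$,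 and $\mathbb{E}[\|K^*(\mathcal{R}^t(r^t)-r^t)\|^2\mid\mathcal{F}_t]\le\omega_{\mathrm{ran}}\|r^t\|^2-\zeta\|K^*r^t\|^2$, for constants $\omega_{\mathrm{ran}}\ge0$, $\zeta\in[0,1]$. *)

theory Defs
  imports "HOL-Analysis.Analysis" "HOL-Probability.Probability"
begin

definition fconj :: "('a::real_inner \<Rightarrow> real) \<Rightarrow> 'a \<Rightarrow> real" where
  "fconj f y = (SUP x. y \<bullet> x - f x)"

definition proj_ran :: "('a::real_inner \<Rightarrow> 'b::real_inner) \<Rightarrow> 'b \<Rightarrow> 'b" where
  "proj_ran K u = (THE v. v \<in> range K \<and> (\<forall>w\<in>range K. (u - v) \<bullet> w = 0))"

definition lambda_min_pos :: "('a::euclidean_space \<Rightarrow> 'b::euclidean_space) \<Rightarrow> real" where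
  "lambda_min_pos K =
     Inf {l. l \<noteq> 0 \<and> (\<exists>v. v \<noteq> 0 \<and> K (adjoint K v) = l *\<^sub>R v)}"

definition gen_filtr :: "'w measure \<Rightarrow> (nat \<Rightarrow> 'w \<Rightarrow> 'x::topological_space)
     \<Rightarrow> (nat \<Rightarrow> 'w \<Rightarrow> 'u::topological_space) \<Rightarrow> nat \<Rightarrow> 'w measure" where
  "gen_filtr M x u t = sigma (space M)
     {(\<lambda>s. (x i s, u i s)) -` B \<inter> space M | i B. i \<le> t \<and> B \<in> sets borel}"

end

theory Submission
  imports Defs
begin

text \<open>
  Write \<open>u\<^sub>0 = proj_ran K u\<close>; optimality gives \<open>\<nabla>f x\<^sup>\<star> = - K\<^sup>* u\<^sub>0\<^sup>\<star>\<close>.  After one step, \<open>\<Psi>\<close>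
  is bounded by a quadratic function of the random estimate \<open>\<rho>\<^sup>t\<close> of the residual
  \<open>r\<^sup>t = K xh\<^sup>t - b\<close> of the forward step \<open>xh\<^sup>t\<close>.  Its conditional expectation only involves the
  conditional mean \<open>r\<^sup>t\<close> of \<open>\<rho>\<^sup>t\<close> and the two variance bounds, and the step-size condition
  absorbs the variance terms.  What remains is \<open>\<parallel>w\<parallel>\<^sup>2/\<gamma> - \<gamma> \<parallel>K\<^sup>* d\<parallel>\<^sup>2 + (1 + \<omega>)/\<tau> \<parallel>d\<parallel>\<^sup>2\<close>,
  where \<open>d = u\<^sub>0 - u\<^sub>0\<^sup>\<star> \<in> ran K\<close> and \<open>w\<close> is the difference of the gradient steps at
  \<open>x\<close> and \<open>x\<^sup>\<star>\<close>: co-coercivity of \<open>\<nabla>f\<close> contracts \<open>w\<close> by \<open>max ((1 - \<gamma>\<mu>)\<^sup>2, (\<gamma>L - 1)\<^sup>2)\<close>,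
  and \<open>\<parallel>K\<^sup>* d\<parallel>\<^sup>2 \<ge> \<lambda>\<^sup>+ \<parallel>d\<parallel>\<^sup>2\<close> on \<open>ran K\<close>.  Hence \<open>E \<Psi>\<^sup>t \<le> c\<^sup>t \<Psi>\<^sup>0\<close>, so
  \<open>\<Sum>\<^sub>t \<Psi>\<^sup>t < \<infinity>\<close> and \<open>\<Psi>\<^sup>t \<rightarrow> 0\<close> almost surely.
\<close>

section \<open>Linear algebra\<close>

lemma linear_le_quadratic_imp_zero:
  fixes A B :: real
  assumes "\<And>s. s * A \<le> s\<^sup>2 * B"
  shows "A = 0"
proof (rule ccontr)
  assume "A \<noteq> 0"
  define s where "s = A / (2 * (\<bar>B\<bar> + 1))"
  have "s \<noteq> 0" and A_eq: "A = s * (2 * (\<bar>B\<bar> + 1))"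
    using \<open>A \<noteq> 0\<close> by (simp_all add: s_def)
  have "s\<^sup>2 * (2 * (\<bar>B\<bar> + 1)) \<le> s\<^sup>2 * B"
    using assms[of s] by (simp add: A_eq power2_eq_square mult.assoc)
  with \<open>s \<noteq> 0\<close> have "2 * (\<bar>B\<bar> + 1) \<le> B" by simp
  then show False by (cases "B \<ge> 0") auto
qed

lemma continuous_on_linear:
  "linear (g :: 'a::euclidean_space \<Rightarrow> 'b::real_normed_vector) \<Longrightarrow> continuous_on S g"
  by (simp add: linear_continuous_on linear_conv_bounded_linear)

lemma power2_norm_add: "(norm (a + b))\<^sup>2 = (norm a)\<^sup>2 + 2 * (a \<bullet> b) + (norm (b::'a::real_inner))\<^sup>2"
  by (simp add: power2_norm_eq_inner inner_add_left inner_add_right inner_commute)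

lemma power2_norm_diff: "(norm (a - b))\<^sup>2 = (norm a)\<^sup>2 - 2 * (a \<bullet> b) + (norm (b::'a::real_inner))\<^sup>2"
  by (simp add: power2_norm_eq_inner inner_diff_left inner_diff_right inner_commute)

lemma power2_norm_diff_scaled:
  fixes a b :: "'a::real_inner"
  assumes "\<gamma> > 0"
  shows "(1 / \<gamma>) * (norm (a - (\<gamma> * c) *\<^sub>R b))\<^sup>2
    = (1 / \<gamma>) * (norm a)\<^sup>2 - 2 * c * (a \<bullet> b) + \<gamma> * c\<^sup>2 * (norm b)\<^sup>2"
proof -
  have "(norm (a - (\<gamma> * c) *\<^sub>R b))\<^sup>2 = (norm a)\<^sup>2 - 2 * (\<gamma> * c) * (a \<bullet> b) + (\<gamma> * c)\<^sup>2 * (norm b)\<^sup>2"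
    by (simp add: power2_norm_diff power_mult_distrib)
  moreover have "(1 / \<gamma>) * (N - 2 * (\<gamma> * c) * X + (\<gamma> * c)\<^sup>2 * Y) = (1 / \<gamma>) * N - 2 * c * X + \<gamma> * c\<^sup>2 * Y"
    for N X Y using assms by (simp add: field_simps power2_eq_square)
  ultimately show ?thesis by simp
qed

lemma subspace_range_linear: "linear K \<Longrightarrow> subspace (range K)"
  by (simp add: linear_subspace_image)

context
  fixes K :: "'a::euclidean_space \<Rightarrow> 'b::euclidean_space"
  assumes linear_K: "linear K"
begin

lemma proj_ran_ex1: "\<exists>!v. v \<in> range K \<and> (\<forall>w\<in>range K. (u - v) \<bullet> w = 0)"
proof (rule ex_ex1I)
  obtain v w where "u = v + w" "v \<in> range K" "w \<in> (range K)\<^sup>\<bottom>"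
    using subspace_sum_orthogonal_comp[OF subspace_range_linear[OF linear_K]] set_plus_elim
    by blast
  then show "\<exists>v. v \<in> range K \<and> (\<forall>w\<in>range K. (u - v) \<bullet> w = 0)"
    by (intro exI[of _ v]) (auto simp: orthogonal_comp_def orthogonal_def inner_commute)
next
  fix v1 v2
  assume v1: "v1 \<in> range K \<and> (\<forall>w\<in>range K. (u - v1) \<bullet> w = 0)"
    and v2: "v2 \<in> range K \<and> (\<forall>w\<in>range K. (u - v2) \<bullet> w = 0)"
  then obtain z where "K z = v1 - v2"
    by (metis rangeE subspace_diff subspace_range_linear[OF linear_K])
  with v1 v2 have "(u - v2) \<bullet> (v1 - v2) - (u - v1) \<bullet> (v1 - v2) = 0" by (metis diff_self rangeI)
  then have "(v1 - v2) \<bullet> (v1 - v2) = 0" by (simp add: algebra_simps inner_diff_left)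
  then show "v1 = v2" by simp
qed

lemma proj_ran_in_range: "proj_ran K u \<in> range K"
  and proj_ran_orthogonal: "w \<in> range K \<Longrightarrow> (u - proj_ran K u) \<bullet> w = 0"
  using theI'[OF proj_ran_ex1[of u]] unfolding proj_ran_def by auto

lemma proj_ran_eqI: "v \<in> range K \<Longrightarrow> (\<And>w. w \<in> range K \<Longrightarrow> (u - v) \<bullet> w = 0) \<Longrightarrow> proj_ran K u = v"
  unfolding proj_ran_def by (rule the1_equality[OF proj_ran_ex1]) auto

lemma inner_proj_ran: "w \<in> range K \<Longrightarrow> w \<bullet> proj_ran K u = w \<bullet> u"
  using proj_ran_orthogonal[of w u] by (simp add: inner_diff_left inner_diff_right inner_commute)

lemma linear_proj_ran: "linear (proj_ran K)"
proof (rule linearI)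
  have S: "subspace (range K)" by (rule subspace_range_linear[OF linear_K])
  show "proj_ran K (a + b) = proj_ran K a + proj_ran K b" for a b
    by (rule proj_ran_eqI)
      (use proj_ran_in_range proj_ran_orthogonal[of _ a] proj_ran_orthogonal[of _ b] S in
        \<open>auto simp: subspace_add algebra_simps inner_diff_left inner_add_left\<close>)
  show "proj_ran K (c *\<^sub>R a) = c *\<^sub>R proj_ran K a" for c a
    by (rule proj_ran_eqI)
      (use proj_ran_in_range proj_ran_orthogonal[of _ a] S in
        \<open>auto simp: subspace_scale scaleR_diff_right[symmetric]\<close>)
qed

lemma norm_proj_ran_le: "norm (proj_ran K u) \<le> norm u"
proof -
  have "orthogonal (proj_ran K u) (u - proj_ran K u)"
    using proj_ran_orthogonal[OF proj_ran_in_range] by (simp add: orthogonal_def inner_commute)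
  then have "(norm u)\<^sup>2 = (norm (proj_ran K u))\<^sup>2 + (norm (u - proj_ran K u))\<^sup>2"
    using norm_add_Pythagorean by fastforce
  then show ?thesis by (simp add: power2_le_imp_le)
qed

lemma adjoint_proj_ran: "adjoint K (proj_ran K u) = adjoint K u"
proof -
  have "z \<bullet> adjoint K (u - proj_ran K u) = 0" for z
    using proj_ran_orthogonal[of "K z" u] by (simp add: adjoint_works[OF linear_K] inner_commute)
  then have "adjoint K (u - proj_ran K u) = 0" by (metis inner_eq_zero_iff)
  then show ?thesis by (simp add: linear_diff[OF adjoint_linear[OF linear_K]])
qed

lemma norm_adjoint_le_onorm: "norm (adjoint K v) \<le> onorm K * norm v"
proof -
  have "(norm (adjoint K v))\<^sup>2 = K (adjoint K v) \<bullet> v"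
    by (simp add: adjoint_works[OF linear_K, symmetric] power2_norm_eq_inner)
  also have "\<dots> \<le> norm (K (adjoint K v)) * norm v" by (rule norm_cauchy_schwarz)
  also have "\<dots> \<le> onorm K * norm (adjoint K v) * norm v"
    by (intro mult_right_mono onorm) (simp_all add: linear_linear linear_K)
  finally show ?thesis
    by (cases "adjoint K v = 0")
      (simp_all add: power2_eq_square mult.assoc mult_le_cancel_left onorm_pos_le linear_linear linear_K)
qed

end

context
  fixes K :: "'a::euclidean_space \<Rightarrow> 'b::euclidean_space"
  assumes linear_K: "linear K"
begin

lemma exists_rayleigh_minimizer:
  assumes "K \<noteq> (\<lambda>_. 0)"
  obtains v0 where "v0 \<in> range K" "norm v0 = 1"
    "\<And>v. v \<in> range K \<Longrightarrow> (norm (adjoint K v0))\<^sup>2 * (norm v)\<^sup>2 \<le> (norm (adjoint K v))\<^sup>2"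
proof -
  have S: "subspace (range K)" by (rule subspace_range_linear[OF linear_K])
  define C where "C = range K \<inter> sphere 0 1"
  have "compact C"
    unfolding C_def by (simp add: closed_subspace[OF S] closed_Int_compact)
  obtain z where "K z \<noteq> 0" using assms by auto
  then have "(1 / norm (K z)) *\<^sub>R K z \<in> C"
    using S by (simp add: C_def subspace_scale)
  then have "C \<noteq> {}" by auto
  have "continuous_on C (\<lambda>v. (norm (adjoint K v))\<^sup>2)"
    using adjoint_linear[OF linear_K] by (intro continuous_intros continuous_on_linear)
  then obtain v0 where v0: "v0 \<in> C" and min: "\<And>v. v \<in> C \<Longrightarrow> (norm (adjoint K v0))\<^sup>2 \<le> (norm (adjoint K v))\<^sup>2"
    using continuous_attains_inf[OF \<open>compact C\<close> \<open>C \<noteq> {}\<close>] by blast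
  show thesis
  proof (rule that)
    show "v0 \<in> range K" "norm v0 = 1" using v0 by (auto simp: C_def)
    fix v assume "v \<in> range K"
    show "(norm (adjoint K v0))\<^sup>2 * (norm v)\<^sup>2 \<le> (norm (adjoint K v))\<^sup>2"
    proof (cases "v = 0")
      case False
      then have "(norm (adjoint K v0))\<^sup>2 \<le> (norm (adjoint K ((1 / norm v) *\<^sub>R v)))\<^sup>2"
        using \<open>v \<in> range K\<close> S by (intro min) (simp add: C_def subspace_scale)
      also have "\<dots> = (norm (adjoint K v))\<^sup>2 / (norm v)\<^sup>2"
        by (simp add: linear_scale[OF adjoint_linear[OF linear_K]] power_divide)
      finally show ?thesis using False by (simp add: field_simps)
    qed (simp add: linear_0[OF adjoint_linear[OF linear_K]])
  qed
qed

lemma rayleigh_minimizer_eigenvector: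
  assumes v0: "v0 \<in> range K"
    and min: "\<And>v. v \<in> range K \<Longrightarrow> m * (norm v)\<^sup>2 \<le> (norm (adjoint K v))\<^sup>2"
    and eq: "(norm (adjoint K v0))\<^sup>2 = m * (norm v0)\<^sup>2"
  shows "K (adjoint K v0) = m *\<^sub>R v0"
proof -
  let ?A = "adjoint K"
  have S: "subspace (range K)" by (rule subspace_range_linear[OF linear_K])
  have linA: "linear ?A" by (rule adjoint_linear[OF linear_K])
  have orth: "(K (?A v0) - m *\<^sub>R v0) \<bullet> h = 0" if h: "h \<in> range K" for h
  proof -
    have "s * (2 * (m * (v0 \<bullet> h) - ?A v0 \<bullet> ?A h)) \<le> s\<^sup>2 * ((norm (?A h))\<^sup>2 - m * (norm h)\<^sup>2)" for s
    proof -
      have "v0 + s *\<^sub>R h \<in> range K" using h v0 S by (simp add: subspace_add subspace_scale)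
      from min[OF this] have "m * ((norm v0)\<^sup>2 + 2 * s * (v0 \<bullet> h) + s\<^sup>2 * (norm h)\<^sup>2)
          \<le> (norm (?A v0))\<^sup>2 + 2 * s * (?A v0 \<bullet> ?A h) + s\<^sup>2 * (norm (?A h))\<^sup>2"
        by (simp add: linear_add[OF linA] linear_scale[OF linA] power2_norm_add power_mult_distrib mult.assoc)
      then show ?thesis using eq by (simp add: algebra_simps)
    qed
    then have "m * (v0 \<bullet> h) = ?A v0 \<bullet> ?A h"
      using linear_le_quadratic_imp_zero by fastforce
    then show ?thesis by (simp add: inner_diff_left adjoint_works[OF linear_K])
  qed
  have "K (?A v0) - m *\<^sub>R v0 \<in> range K" using v0 S by (simp add: subspace_diff subspace_scale)
  from orth[OF this] show ?thesis by simp
qed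

lemma lambda_min_pos_eq_rayleigh_min:
  assumes v0: "v0 \<in> range K" "norm v0 = 1"
    and min: "\<And>v. v \<in> range K \<Longrightarrow> (norm (adjoint K v0))\<^sup>2 * (norm v)\<^sup>2 \<le> (norm (adjoint K v))\<^sup>2"
  shows "lambda_min_pos K = (norm (adjoint K v0))\<^sup>2" and "(norm (adjoint K v0))\<^sup>2 > 0"
proof -
  let ?A = "adjoint K" and ?m = "(norm (adjoint K v0))\<^sup>2"
  obtain y where y: "v0 = K y" using v0 by auto
  have "?A v0 \<noteq> 0"
  proof
    assume "?A v0 = 0"
    then have "K y \<bullet> v0 = 0" by (metis adjoint_works[OF linear_K] inner_zero_right)
    then show False using y v0 by simp
  qed
  then show m_pos: "?m > 0" by simp
  have eigen: "K (?A v0) = ?m *\<^sub>R v0"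
    by (rule rayleigh_minimizer_eigenvector[OF v0(1) min]) (simp_all add: v0)
  have le: "?m \<le> l" if "l \<noteq> 0" "v \<noteq> 0" "K (?A v) = l *\<^sub>R v" for l v
  proof -
    have "v = K ((1 / l) *\<^sub>R ?A v)" using that by (simp add: linear_scale[OF linear_K])
    then have "v \<in> range K" by (metis rangeI)
    have "l * (norm v)\<^sup>2 = (norm (?A v))\<^sup>2"
      using that(3) by (metis adjoint_works[OF linear_K] inner_scaleR_left power2_norm_eq_inner)
    with min[OF \<open>v \<in> range K\<close>] have "?m * (norm v)\<^sup>2 \<le> l * (norm v)\<^sup>2" by simp
    with that(2) show ?thesis by (simp add: mult_le_cancel_right)
  qed
  show "lambda_min_pos K = ?m"
    unfolding lambda_min_pos_def
  proof (rule cInf_eq_minimum)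
    show "?m \<in> {l. l \<noteq> 0 \<and> (\<exists>v. v \<noteq> 0 \<and> K (?A v) = l *\<^sub>R v)}"
      using m_pos eigen v0 by (intro CollectI conjI exI[of _ v0]) auto
  qed (use le in blast)
qed

lemma lambda_min_pos_pos: "K \<noteq> (\<lambda>_. 0) \<Longrightarrow> lambda_min_pos K > 0"
  and lambda_min_pos_le_norm_adjoint:
    "K \<noteq> (\<lambda>_. 0) \<Longrightarrow> v \<in> range K \<Longrightarrow> lambda_min_pos K * (norm v)\<^sup>2 \<le> (norm (adjoint K v))\<^sup>2"
proof -
  assume "K \<noteq> (\<lambda>_. 0)"
  then obtain v0 where v0: "v0 \<in> range K" "norm v0 = 1"
    "\<And>v. v \<in> range K \<Longrightarrow> (norm (adjoint K v0))\<^sup>2 * (norm v)\<^sup>2 \<le> (norm (adjoint K v))\<^sup>2"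
    using exists_rayleigh_minimizer by blast
  note eq = lambda_min_pos_eq_rayleigh_min[OF v0]
  show "lambda_min_pos K > 0" using eq by simp
  show "v \<in> range K \<Longrightarrow> lambda_min_pos K * (norm v)\<^sup>2 \<le> (norm (adjoint K v))\<^sup>2"
    using eq v0(3) by simp
qed

end

lemma orthogonal_kernel_imp_in_range_adjoint:
  fixes K :: "'a::euclidean_space \<Rightarrow> 'b::euclidean_space"
  assumes "linear K" and "\<And>h. K h = 0 \<Longrightarrow> v \<bullet> h = 0"
  shows "v \<in> range (adjoint K)"
proof -
  have "v \<in> (K -` {0})\<^sup>\<bottom>"
    using assms(2) by (auto simp: orthogonal_comp_def orthogonal_def inner_commute)
  also have "(K -` {0})\<^sup>\<bottom> = range (adjoint K)"
    by (simp add: ker_orthogonal_comp_adjoint[OF assms(1)] orthogonal_comp_self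
        subspace_range_linear adjoint_linear assms(1))
  finally show ?thesis .
qed

section \<open>Smooth strongly convex functions\<close>

lemma cocoercive_of_quadratic_bounds:
  fixes h :: "'a::real_inner \<Rightarrow> real" and gh :: "'a \<Rightarrow> 'a"
  assumes L: "L > 0"
    and lower: "\<And>x y. h x + gh x \<bullet> (y - x) \<le> h y"
    and upper: "\<And>x y. h y \<le> h x + gh x \<bullet> (y - x) + L / 2 * (norm (y - x))\<^sup>2"
  shows "(norm (gh x - gh y))\<^sup>2 \<le> L * ((gh x - gh y) \<bullet> (x - y))"
proof -
  have half: "h a - gh a \<bullet> a + (norm (gh b - gh a))\<^sup>2 / (2 * L) \<le> h b - gh a \<bullet> b" for a b
  proof -
    define D where "D = gh b - gh a"
    \<comment> \<open>compare the tangent at \<open>a\<close> with the upper bound at \<open>b\<close> where the latter is minimal\<close>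
    define z where "z = b - (1 / L) *\<^sub>R D"
    have "h a + gh a \<bullet> (z - a) \<le> h b + gh b \<bullet> (z - b) + L / 2 * (norm (z - b))\<^sup>2"
      using lower[of a z] upper[where x=b and y=z] by linarith
    moreover have "gh a \<bullet> (z - a) = gh a \<bullet> b - gh a \<bullet> a - (gh a \<bullet> D) / L"
      by (simp add: z_def inner_diff_right)
    moreover have "gh b \<bullet> (z - b) = - (gh b \<bullet> D) / L"
      by (simp add: z_def)
    moreover have "L / 2 * (norm (z - b))\<^sup>2 = (norm D)\<^sup>2 / (2 * L)"
      using L by (simp add: z_def power2_eq_square)
    moreover have "(gh b \<bullet> D) / L - (gh a \<bullet> D) / L = (norm D)\<^sup>2 / L"
      by (simp add: D_def power2_norm_eq_inner inner_diff_left diff_divide_distrib[symmetric])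
    moreover have "(norm D)\<^sup>2 / L - (norm D)\<^sup>2 / (2 * L) = (norm D)\<^sup>2 / (2 * L)"
      by simp
    ultimately show ?thesis by (simp add: D_def)
  qed
  have "(gh x - gh y) \<bullet> (x - y) = gh x \<bullet> x - gh x \<bullet> y - gh y \<bullet> x + gh y \<bullet> y"
    by (simp add: inner_diff_left inner_diff_right)
  then have "(norm (gh x - gh y))\<^sup>2 / L \<le> (gh x - gh y) \<bullet> (x - y)"
    using half[of x y] half[of y x] by (simp add: norm_minus_commute)
  then show ?thesis using L by (simp add: field_simps)
qed

lemma convex_on_along_line:
  fixes g :: "'a::real_vector \<Rightarrow> real"
  assumes "convex_on UNIV g"
  shows "convex_on UNIV (\<lambda>s::real. g (x + s *\<^sub>R d))"
proof (rule convex_onI)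
  fix t a c :: real assume "t > 0" "t < 1"
  have "x + ((1 - t) * a + t * c) *\<^sub>R d = (1 - t) *\<^sub>R (x + a *\<^sub>R d) + t *\<^sub>R (x + c *\<^sub>R d)"
    by (simp add: scaleR_add_right scaleR_add_left scaleR_diff_left)
  then show "g (x + ((1 - t) *\<^sub>R a + t *\<^sub>R c) *\<^sub>R d) \<le> (1 - t) * g (x + a *\<^sub>R d) + t * g (x + c *\<^sub>R d)"
    using convex_onD[OF assms, of t "x + a *\<^sub>R d" "x + c *\<^sub>R d"] \<open>t > 0\<close> \<open>t < 1\<close> by simp
qed simp

locale smooth_strongly_convex =
  fixes f :: "'a::euclidean_space \<Rightarrow> real" and gf :: "'a \<Rightarrow> 'a" and L mu :: real
  assumes has_derivative_f: "\<And>y. (f has_derivative (\<lambda>h. gf y \<bullet> h)) (at y)"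
    and lipschitz_gf: "\<And>y z. norm (gf y - gf z) \<le> L * norm (y - z)"
    and strongly_convex_f: "convex_on UNIV (\<lambda>y. f y - mu / 2 * (norm y)\<^sup>2)"
    and mu_pos: "mu > 0"
begin

lemma has_real_derivative_along_line:
  "((\<lambda>s. f (x + s *\<^sub>R d)) has_real_derivative (gf (x + s *\<^sub>R d) \<bullet> d)) (at s)"
proof -
  have "((\<lambda>s. f (x + s *\<^sub>R d)) has_derivative (\<lambda>h. gf (x + s *\<^sub>R d) \<bullet> (h *\<^sub>R d))) (at s)"
    by (rule has_derivative_compose[OF _ has_derivative_f]) (auto intro!: derivative_eq_intros)
  then show ?thesis by (simp add: has_field_derivative_def mult_commute_abs)
qed

lemma descent_lemma: "f y \<le> f x + gf x \<bullet> (y - x) + L / 2 * (norm (y - x))\<^sup>2"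
proof -
  define d where "d = y - x"
  define \<psi> where "\<psi> = (\<lambda>s. f (x + s *\<^sub>R d) - s * (gf x \<bullet> d) - L / 2 * s\<^sup>2 * (norm d)\<^sup>2)"
  have "\<psi> 1 \<le> \<psi> 0"
  proof (rule DERIV_nonpos_imp_nonincreasing[of 0 1])
    fix s :: real assume s: "0 \<le> s" "s \<le> 1"
    have "(\<psi> has_real_derivative (gf (x + s *\<^sub>R d) - gf x) \<bullet> d - L * s * (norm d)\<^sup>2) (at s)"
      unfolding \<psi>_def
      by (auto intro!: derivative_eq_intros has_real_derivative_along_line simp: inner_diff_left)
    moreover have "(gf (x + s *\<^sub>R d) - gf x) \<bullet> d \<le> L * s * (norm d)\<^sup>2"
    proof -
      have "(gf (x + s *\<^sub>R d) - gf x) \<bullet> d \<le> norm (gf (x + s *\<^sub>R d) - gf x) * norm d"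
        by (rule norm_cauchy_schwarz)
      also have "\<dots> \<le> L * norm (s *\<^sub>R d) * norm d"
        by (intro mult_right_mono) (use lipschitz_gf[of "x + s *\<^sub>R d" x] in auto)
      finally show ?thesis using s by (simp add: power2_eq_square)
    qed
    ultimately show "\<exists>y. (\<psi> has_real_derivative y) (at s) \<and> y \<le> 0" by force
  qed simp
  then show ?thesis by (simp add: \<psi>_def d_def)
qed

lemma strong_convexity_lower_bound: "f x + gf x \<bullet> (y - x) + mu / 2 * (norm (y - x))\<^sup>2 \<le> f y"
proof -
  define d where "d = y - x"
  define \<phi> where "\<phi> = (\<lambda>s. f (x + s *\<^sub>R d) - mu / 2 * (norm (x + s *\<^sub>R d))\<^sup>2)"
  have "convex_on UNIV \<phi>"
    unfolding \<phi>_def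
    by (rule convex_on_along_line[OF strongly_convex_f])
  have "(\<phi> has_real_derivative (gf x \<bullet> d - mu * (x \<bullet> d))) (at 0)"
  proof -
    have "\<phi> = (\<lambda>s. f (x + s *\<^sub>R d) - mu / 2 * ((norm x)\<^sup>2 + 2 * s * (x \<bullet> d) + s\<^sup>2 * (norm d)\<^sup>2))"
      by (auto simp: \<phi>_def power2_norm_add power_mult_distrib)
    then show ?thesis
      by (auto intro!: derivative_eq_intros has_real_derivative_along_line[of x d 0, simplified]
          simp: algebra_simps)
  qed
  then have "\<phi> 1 - \<phi> 0 \<ge> (gf x \<bullet> d - mu * (x \<bullet> d)) * (1 - 0)"
    by (intro convex_on_imp_above_tangent[OF \<open>convex_on UNIV \<phi>\<close>]) auto
  then have "\<phi> 1 - \<phi> 0 \<ge> gf x \<bullet> d - mu * (x \<bullet> d)"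
    by simp
  moreover have "\<phi> 1 - \<phi> 0 = f (x + d) - f x - mu / 2 * ((norm (x + d))\<^sup>2 - (norm x)\<^sup>2)"
    by (simp add: \<phi>_def algebra_simps)
  moreover have "mu / 2 * ((norm (x + d))\<^sup>2 - (norm x)\<^sup>2) = mu * (x \<bullet> d) + mu / 2 * (norm d)\<^sup>2"
    by (simp add: power2_norm_add field_simps inner_commute)
  ultimately have "f x + gf x \<bullet> d + mu / 2 * (norm d)\<^sup>2 \<le> f (x + d)"
    by linarith
  then show ?thesis by (simp add: d_def)
qed

lemma mu_le_L: "mu \<le> L"
proof -
  obtain e :: 'a where "e \<noteq> 0" using nonzero_Basis SOME_Basis by blast
  have "mu / 2 * (norm e)\<^sup>2 \<le> L / 2 * (norm e)\<^sup>2"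
    using strong_convexity_lower_bound[of 0 e] descent_lemma[of e 0] by simp
  with \<open>e \<noteq> 0\<close> show ?thesis by simp
qed

lemma L_pos: "L > 0"
  using mu_le_L mu_pos by simp

lemma strongly_monotone_gradient: "mu * (norm (x - y))\<^sup>2 \<le> (gf x - gf y) \<bullet> (x - y)"
  using strong_convexity_lower_bound[of x y] strong_convexity_lower_bound[of y x]
  by (simp add: norm_minus_commute inner_diff_left inner_diff_right)

lemma cocoercive_gradient:
  "(norm (gf x - gf y))\<^sup>2 + mu * L * (norm (x - y))\<^sup>2 \<le> (L + mu) * ((gf x - gf y) \<bullet> (x - y))"
proof -
  \<comment> \<open>\<open>h\<close> is convex and \<open>(L - mu)\<close>-smooth\<close>
  define h where "h = (\<lambda>y. f y - mu / 2 * (norm y)\<^sup>2)"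
  define gh where "gh = (\<lambda>y. gf y - mu *\<^sub>R y)"
  have h_gap: "h b - h a - gh a \<bullet> (b - a) = f b - f a - gf a \<bullet> (b - a) - mu / 2 * (norm (b - a))\<^sup>2"
    for a b
  proof -
    have "h b - h a - gh a \<bullet> (b - a)
        = f b - f a - gf a \<bullet> (b - a) - mu / 2 * ((norm b)\<^sup>2 - (norm a)\<^sup>2 - 2 * (a \<bullet> (b - a)))"
      by (simp add: h_def gh_def inner_diff_left algebra_simps)
    also have "(norm b)\<^sup>2 - (norm a)\<^sup>2 - 2 * (a \<bullet> (b - a)) = (norm (b - a))\<^sup>2"
      using power2_norm_add[of a "b - a"] by simp
    finally show ?thesis .
  qed
  have gh_diff: "gh x - gh y = (gf x - gf y) - mu *\<^sub>R (x - y)"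
    by (simp add: gh_def algebra_simps)
  define P where "P = (gh x - gh y) \<bullet> (x - y)"
  have P_eq: "P = (gf x - gf y) \<bullet> (x - y) - mu * (norm (x - y))\<^sup>2"
    by (simp add: P_def gh_diff inner_diff_left power2_norm_eq_inner)
  have "P \<ge> 0"
    using strongly_monotone_gradient[of x y] by (simp add: P_eq)
  have co: "(norm (gh x - gh y))\<^sup>2 \<le> (L - mu + e) * P" if "e > 0" for e
    unfolding P_def
  proof (rule cocoercive_of_quadratic_bounds)
    show "L - mu + e > 0" using mu_le_L that by simp
    show "h a + gh a \<bullet> (b - a) \<le> h b" for a b
      using h_gap[of b a] strong_convexity_lower_bound[of a b] by linarith
    show "h b \<le> h a + gh a \<bullet> (b - a) + (L - mu + e) / 2 * (norm (b - a))\<^sup>2" for a b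
    proof -
      have "(L - mu) / 2 * (norm (b - a))\<^sup>2 \<le> (L - mu + e) / 2 * (norm (b - a))\<^sup>2"
        using that by (intro mult_right_mono) auto
      then show ?thesis
        using h_gap[of b a] descent_lemma[of b a] by (simp add: left_diff_distrib diff_divide_distrib)
    qed
  qed
  have "(norm (gh x - gh y))\<^sup>2 \<le> (L - mu) * P"
  proof (rule field_le_epsilon)
    fix e :: real assume "e > 0"
    have "(norm (gh x - gh y))\<^sup>2 \<le> (L - mu) * P + e * (P / (P + 1))"
      using co[of "e / (P + 1)"] \<open>e > 0\<close> \<open>P \<ge> 0\<close> by (simp add: field_simps)
    also have "\<dots> \<le> (L - mu) * P + e"
      using \<open>e > 0\<close> \<open>P \<ge> 0\<close> by (intro add_left_mono mult_left_le) auto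
    finally show "(norm (gh x - gh y))\<^sup>2 \<le> (L - mu) * P + e" .
  qed
  moreover have "(norm (gh x - gh y))\<^sup>2
      = (norm (gf x - gf y))\<^sup>2 - 2 * mu * ((gf x - gf y) \<bullet> (x - y)) + mu\<^sup>2 * (norm (x - y))\<^sup>2"
    by (simp add: gh_diff power2_norm_diff power_mult_distrib)
  ultimately show ?thesis
    by (simp add: P_eq algebra_simps power2_eq_square)
qed

lemma gradient_step_contraction:
  assumes "\<gamma> > 0"
  shows "(norm ((x - \<gamma> *\<^sub>R gf x) - (y - \<gamma> *\<^sub>R gf y)))\<^sup>2
         \<le> max ((1 - \<gamma> * mu)\<^sup>2) ((\<gamma> * L - 1)\<^sup>2) * (norm (x - y))\<^sup>2"
proof -
  define n where "n = (norm (x - y))\<^sup>2"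
  define q where "q = (norm (gf x - gf y))\<^sup>2"
  define p where "p = (gf x - gf y) \<bullet> (x - y)"
  define c where "c = max ((1 - \<gamma> * mu)\<^sup>2) ((\<gamma> * L - 1)\<^sup>2)"
  have "n \<ge> 0" and "L + mu > 0" using L_pos mu_pos by (simp_all add: n_def)
  have q_le: "q \<le> L\<^sup>2 * n"
    using power_mono[OF lipschitz_gf[of x y], of 2] by (simp add: q_def n_def power_mult_distrib)
  have q_ge: "mu\<^sup>2 * n \<le> q"
  proof -
    have "mu * (norm (x - y))\<^sup>2 \<le> norm (gf x - gf y) * norm (x - y)"
      using strongly_monotone_gradient[of x y] norm_cauchy_schwarz[of "gf x - gf y" "x - y"] by simp
    then have "mu * norm (x - y) \<le> norm (gf x - gf y)"
      by (cases "x = y") (auto simp: power2_eq_square)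
    from power_mono[OF this, of 2] show ?thesis
      using mu_pos by (simp add: q_def n_def power_mult_distrib)
  qed
  have "(norm ((x - \<gamma> *\<^sub>R gf x) - (y - \<gamma> *\<^sub>R gf y)))\<^sup>2 = n - 2 * \<gamma> * p + \<gamma>\<^sup>2 * q"
  proof -
    have eq: "(x - \<gamma> *\<^sub>R gf x) - (y - \<gamma> *\<^sub>R gf y) = (x - y) - \<gamma> *\<^sub>R (gf x - gf y)"
      by (simp add: algebra_simps)
    show ?thesis
      unfolding eq n_def p_def q_def power2_norm_diff[of "x - y"] inner_scaleR_right norm_scaleR
      by (simp add: power_mult_distrib inner_commute[of "x - y"])
  qed
  moreover have "(L + mu) * (n - 2 * \<gamma> * p + \<gamma>\<^sup>2 * q) \<le> (L + mu) * (c * n)"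
  proof -
    \<comment> \<open>eliminate \<open>p\<close> by co-coercivity; what remains is linear in \<open>q\<close>, so an endpoint bound on \<open>q\<close> suffices\<close>
    have "(L + mu) * (n - 2 * \<gamma> * p + \<gamma>\<^sup>2 * q)
        \<le> (L + mu) * n - 2 * \<gamma> * mu * L * n + \<gamma> * q * (\<gamma> * (L + mu) - 2)"
    proof -
      have "2 * \<gamma> * (q + mu * L * n) \<le> 2 * \<gamma> * ((L + mu) * p)"
        using cocoercive_gradient[of x y] assms by (simp add: n_def p_def q_def)
      then show ?thesis by (simp add: algebra_simps power2_eq_square)
    qed
    also have "\<dots> \<le> (L + mu) * (c * n)"
    proof (cases "\<gamma> * (L + mu) \<le> 2")
      case True
      have "\<gamma> * q * (\<gamma> * (L + mu) - 2) \<le> \<gamma> * (mu\<^sup>2 * n) * (\<gamma> * (L + mu) - 2)"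
        using True q_ge assms by (intro mult_right_mono_neg mult_left_mono) auto
      moreover have "(1 - \<gamma> * mu)\<^sup>2 * n \<le> c * n"
        using \<open>n \<ge> 0\<close> by (intro mult_right_mono) (auto simp: c_def)
      ultimately show ?thesis
        using \<open>L + mu > 0\<close> mult_left_mono[of "(1 - \<gamma> * mu)\<^sup>2 * n" "c * n" "L + mu"]
        by (simp add: algebra_simps power2_eq_square)
    next
      case False
      have "\<gamma> * q * (\<gamma> * (L + mu) - 2) \<le> \<gamma> * (L\<^sup>2 * n) * (\<gamma> * (L + mu) - 2)"
        using False q_le assms by (intro mult_right_mono mult_left_mono) auto
      moreover have "(\<gamma> * L - 1)\<^sup>2 * n \<le> c * n"
        using \<open>n \<ge> 0\<close> by (intro mult_right_mono) (auto simp: c_def)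
      ultimately show ?thesis
        using \<open>L + mu > 0\<close> mult_left_mono[of "(\<gamma> * L - 1)\<^sup>2 * n" "c * n" "L + mu"]
        by (simp add: algebra_simps power2_eq_square)
    qed
    finally show ?thesis .
  qed
  ultimately show ?thesis
    using \<open>L + mu > 0\<close> by (simp add: c_def n_def)
qed

lemma gradient_inner_eq_of_line_bound:
  assumes "\<And>s. f x + s * a \<le> f (x + s *\<^sub>R d)"
  shows "gf x \<bullet> d = a"
proof -
  have "s * (a - gf x \<bullet> d) \<le> s\<^sup>2 * (L / 2 * (norm d)\<^sup>2)" for s
    using assms[of s] descent_lemma[of "x + s *\<^sub>R d" x]
    by (simp add: power_mult_distrib algebra_simps)
  from linear_le_quadratic_imp_zero[OF this] show ?thesis by simp
qed

lemma bdd_above_conjugate: "bdd_above (range (\<lambda>y. g \<bullet> y - f y))"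
proof (rule bdd_aboveI2)
  fix y
  define a where "a = g - gf 0"
  have "(norm (a - mu *\<^sub>R y))\<^sup>2 = (norm a)\<^sup>2 - 2 * (mu * (a \<bullet> y)) + mu\<^sup>2 * (norm y)\<^sup>2"
    by (simp add: power2_norm_diff power_mult_distrib)
  then have "0 \<le> (norm a)\<^sup>2 - 2 * (mu * (a \<bullet> y)) + mu\<^sup>2 * (norm y)\<^sup>2"
    by (metis zero_le_power2)
  then have "2 * mu * (a \<bullet> y - mu / 2 * (norm y)\<^sup>2) \<le> (norm a)\<^sup>2"
    by (simp add: algebra_simps power2_eq_square)
  then have "a \<bullet> y - mu / 2 * (norm y)\<^sup>2 \<le> (norm a)\<^sup>2 / (2 * mu)"
    using mu_pos by (simp add: le_divide_eq mult.commute)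
  moreover have "f 0 + gf 0 \<bullet> y + mu / 2 * (norm y)\<^sup>2 \<le> f y"
    using strong_convexity_lower_bound[of 0 y] by simp
  ultimately show "g \<bullet> y - f y \<le> (norm a)\<^sup>2 / (2 * mu) - f 0"
    by (simp add: a_def inner_diff_left)
qed

lemma fconj_gradient: "fconj f (gf x) = gf x \<bullet> x - f x"
  unfolding fconj_def
proof (rule cSup_eq_maximum)
  fix r assume "r \<in> range (\<lambda>y. gf x \<bullet> y - f y)"
  then obtain y where "r = gf x \<bullet> y - f y" by auto
  moreover have "0 \<le> mu / 2 * (norm (y - x))\<^sup>2" using mu_pos by simp
  ultimately show "r \<le> gf x \<bullet> x - f x"
    using strong_convexity_lower_bound[of x y] by (simp add: inner_diff_right)
qed simp

lemma gradient_eq_of_fconj_le: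
  assumes "fconj f g \<le> g \<bullet> x - f x"
  shows "gf x = g"
proof -
  have "g \<bullet> y - f y \<le> g \<bullet> x - f x" for y
    using cSUP_upper[OF _ bdd_above_conjugate, of y g] assms by (simp add: fconj_def)
  then have "gf x \<bullet> d = g \<bullet> d" for d
    by (intro gradient_inner_eq_of_line_bound) (smt (verit) inner_add_right inner_scaleR_right)
  from this[of "gf x - g"] have "(gf x - g) \<bullet> (gf x - g) = 0"
    by (simp add: inner_diff_left)
  then show ?thesis by simp
qed

end

section \<open>Square-integrable random vectors and conditional expectation\<close>

lemma borel_measurable_linear:
  "linear (g :: 'a::euclidean_space \<Rightarrow> 'b::euclidean_space) \<Longrightarrow> g \<in> borel_measurable borel"
  by (intro borel_measurable_continuous_onI continuous_on_linear)

lemma integrable_abs_le: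
  fixes g :: "'a \<Rightarrow> real"
  assumes "integrable M h" "g \<in> borel_measurable M" "\<And>s. \<bar>g s\<bar> \<le> h s"
  shows "integrable M g"
  using assms(1,2)
  by (rule Bochner_Integration.integrable_bound) (auto intro: order_trans[OF assms(3) abs_ge_self])

definition square_integrable :: "'a measure \<Rightarrow> ('a \<Rightarrow> 'b::euclidean_space) \<Rightarrow> bool" where
  "square_integrable M v \<longleftrightarrow> v \<in> borel_measurable M \<and> integrable M (\<lambda>s. (norm (v s))\<^sup>2)"

lemma square_integrableD:
  assumes "square_integrable M v"
  shows square_integrable_measurable: "v \<in> borel_measurable M"
    and integrable_norm_sq: "integrable M (\<lambda>s. (norm (v s))\<^sup>2)"
  using assms unfolding square_integrable_def by blast+

lemma square_integrable_le:
  assumes [measurable]: "v \<in> borel_measurable M"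
    and "square_integrable M w" "\<And>s. norm (v s) \<le> C * norm (w s)"
  shows "square_integrable M v"
  unfolding square_integrable_def
proof
  have "integrable M (\<lambda>s. C\<^sup>2 * (norm (w s))\<^sup>2)"
    using integrable_norm_sq[OF assms(2)] by simp
  moreover have "(\<lambda>s. (norm (v s))\<^sup>2) \<in> borel_measurable M" by measurable
  ultimately show "integrable M (\<lambda>s. (norm (v s))\<^sup>2)"
    by (rule integrable_abs_le)
      (use power_mono[OF assms(3) norm_ge_zero, where n=2] in \<open>simp add: power_mult_distrib\<close>)
qed (rule assms(1))

lemma square_integrable_add:
  assumes "square_integrable M v" "square_integrable M w"
  shows "square_integrable M (\<lambda>s. v s + w s)"
  unfolding square_integrable_def
proof
  note [measurable] = square_integrable_measurable[OF assms(1)] square_integrable_measurable[OF assms(2)]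
  show "(\<lambda>s. v s + w s) \<in> borel_measurable M" by measurable
  have "(norm (v s + w s))\<^sup>2 \<le> 2 * (norm (v s))\<^sup>2 + 2 * (norm (w s))\<^sup>2" for s
  proof -
    have "(norm (v s + w s))\<^sup>2 \<le> (norm (v s) + norm (w s))\<^sup>2"
      by (simp add: norm_triangle_ineq power_mono)
    also have "\<dots> \<le> 2 * (norm (v s))\<^sup>2 + 2 * (norm (w s))\<^sup>2"
      using zero_le_power2[of "norm (v s) - norm (w s)"] unfolding power2_sum power2_diff
      by linarith
    finally show ?thesis .
  qed
  moreover have "integrable M (\<lambda>s. 2 * (norm (v s))\<^sup>2 + 2 * (norm (w s))\<^sup>2)"
    using integrable_norm_sq[OF assms(1)] integrable_norm_sq[OF assms(2)] by simp
  moreover have "(\<lambda>s. (norm (v s + w s))\<^sup>2) \<in> borel_measurable M" by measurable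
  ultimately show "integrable M (\<lambda>s. (norm (v s + w s))\<^sup>2)"
    by (rule_tac integrable_abs_le) simp_all
qed

lemma square_integrable_scaleR:
  assumes "square_integrable M v"
  shows "square_integrable M (\<lambda>s. c *\<^sub>R v s)"
proof (rule square_integrable_le[OF _ assms])
  note [measurable] = square_integrable_measurable[OF assms]
  show "(\<lambda>s. c *\<^sub>R v s) \<in> borel_measurable M" by measurable
  show "norm (c *\<^sub>R v s) \<le> \<bar>c\<bar> * norm (v s)" for s by simp
qed

lemma square_integrable_diff:
  assumes "square_integrable M v" "square_integrable M w"
  shows "square_integrable M (\<lambda>s. v s - w s)"
proof -
  have "square_integrable M (\<lambda>s. v s + (- 1) *\<^sub>R w s)"
    by (intro square_integrable_add square_integrable_scaleR assms)
  then show ?thesis by simp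
qed

lemma square_integrable_linear:
  assumes "linear g" "square_integrable M v"
  shows "square_integrable M (\<lambda>s. g (v s))"
proof (rule square_integrable_le[OF _ assms(2)])
  show "(\<lambda>s. g (v s)) \<in> borel_measurable M"
    by (rule measurable_compose[OF square_integrable_measurable[OF assms(2)] borel_measurable_linear[OF assms(1)]])
  show "norm (g (v s)) \<le> onorm g * norm (v s)" for s
    using assms(1) by (intro onorm) (simp add: linear_conv_bounded_linear)
qed

lemma integrable_inner:
  assumes "square_integrable M v" "square_integrable M w"
  shows "integrable M (\<lambda>s. v s \<bullet> w s)"
proof (rule integrable_abs_le)
  note [measurable] = square_integrable_measurable[OF assms(1)] square_integrable_measurable[OF assms(2)]
  show "(\<lambda>s. v s \<bullet> w s) \<in> borel_measurable M" by measurable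
  show "integrable M (\<lambda>s. (norm (v s))\<^sup>2 + (norm (w s))\<^sup>2)"
    using integrable_norm_sq[OF assms(1)] integrable_norm_sq[OF assms(2)] by simp
  show "\<bar>v s \<bullet> w s\<bar> \<le> (norm (v s))\<^sup>2 + (norm (w s))\<^sup>2" for s
  proof -
    have "\<bar>v s \<bullet> w s\<bar> \<le> norm (v s) * norm (w s)" by (rule Cauchy_Schwarz_ineq2)
    also have "\<dots> \<le> (norm (v s))\<^sup>2 + (norm (w s))\<^sup>2"
      using zero_le_power2[of "norm (v s) - norm (w s)"] mult_nonneg_nonneg[OF norm_ge_zero norm_ge_zero, of "v s" "w s"]
      unfolding power2_diff by linarith
    finally show ?thesis .
  qed
qed

context sigma_finite_subalgebra
begin

lemma integral_le_of_nn_cond_exp_le: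
  assumes [measurable]: "g \<in> borel_measurable M" and g_nonneg: "\<And>s. 0 \<le> g s"
    and "integrable M k" and k_nonneg: "\<And>s. 0 \<le> k s"
    and "integrable M h" and h_nonneg: "\<And>s. 0 \<le> h s"
    and le: "AE s in M. nn_cond_exp M F (\<lambda>s. ennreal (g s)) s + ennreal (k s) \<le> ennreal (h s)"
  shows "integrable M g" and "(\<integral>s. g s \<partial>M) + (\<integral>s. k s \<partial>M) \<le> (\<integral>s. h s \<partial>M)"
proof -
  have [measurable]: "k \<in> borel_measurable M" by (rule borel_measurable_integrable) fact
  have "(\<integral>\<^sup>+s. ennreal (g s) \<partial>M) + (\<integral>\<^sup>+s. ennreal (k s) \<partial>M)
      = (\<integral>\<^sup>+s. nn_cond_exp M F (\<lambda>s. ennreal (g s)) s + ennreal (k s) \<partial>M)"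
    using nn_cond_exp_intg[of "\<lambda>_. 1" "\<lambda>s. ennreal (g s)"] by (simp add: nn_integral_add)
  also have "\<dots> \<le> (\<integral>\<^sup>+s. ennreal (h s) \<partial>M)"
    by (rule nn_integral_mono_AE[OF le])
  also have "\<dots> = ennreal (\<integral>s. h s \<partial>M)"
    by (rule nn_integral_eq_integral) (simp_all add: \<open>integrable M h\<close> h_nonneg)
  finally have nn_le: "(\<integral>\<^sup>+s. ennreal (g s) \<partial>M) + (\<integral>\<^sup>+s. ennreal (k s) \<partial>M) \<le> ennreal (\<integral>s. h s \<partial>M)" .
  show "integrable M g"
  proof (rule integrableI_bounded)
    have "(\<integral>\<^sup>+s. ennreal (norm (g s)) \<partial>M) = (\<integral>\<^sup>+s. ennreal (g s) \<partial>M)"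
      using g_nonneg by simp
    also have "\<dots> \<le> ennreal (\<integral>s. h s \<partial>M)"
      using nn_le by (rule order_trans[rotated]) (rule add_increasing2, auto)
    also have "\<dots> < \<infinity>" by simp
    finally show "(\<integral>\<^sup>+s. ennreal (norm (g s)) \<partial>M) < \<infinity>" .
  qed simp
  then have "(\<integral>\<^sup>+s. ennreal (g s) \<partial>M) = ennreal (\<integral>s. g s \<partial>M)"
    by (rule nn_integral_eq_integral) (simp add: g_nonneg)
  moreover have "(\<integral>\<^sup>+s. ennreal (k s) \<partial>M) = ennreal (\<integral>s. k s \<partial>M)"
    by (rule nn_integral_eq_integral) (simp_all add: \<open>integrable M k\<close> k_nonneg)
  moreover have "ennreal ((\<integral>s. g s \<partial>M) + (\<integral>s. k s \<partial>M)) = ennreal (\<integral>s. g s \<partial>M) + ennreal (\<integral>s. k s \<partial>M)"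
    by (rule ennreal_plus) (simp_all add: integral_nonneg_AE g_nonneg k_nonneg)
  ultimately have "ennreal ((\<integral>s. g s \<partial>M) + (\<integral>s. k s \<partial>M)) \<le> ennreal (\<integral>s. h s \<partial>M)"
    using nn_le by simp
  then show "(\<integral>s. g s \<partial>M) + (\<integral>s. k s \<partial>M) \<le> (\<integral>s. h s \<partial>M)"
    by (subst (asm) ennreal_le_iff) (simp_all add: integral_nonneg_AE h_nonneg)
qed

lemma integral_inner_eq_of_cond_exp:
  fixes G \<rho> r :: "'a \<Rightarrow> 'b::euclidean_space"
  assumes [measurable]: "G \<in> borel_measurable F"
    and "square_integrable M G" "square_integrable M \<rho>" "square_integrable M r"
    and cond_exp: "\<And>a. AE s in M. real_cond_exp M F (\<lambda>s. a \<bullet> \<rho> s) s = a \<bullet> r s"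
  shows "(\<integral>s. G s \<bullet> \<rho> s \<partial>M) = (\<integral>s. G s \<bullet> r s \<partial>M)"
proof -
  note [measurable] = square_integrable_measurable[OF assms(3)] square_integrable_measurable[OF assms(4)]
  have [measurable]: "G \<in> borel_measurable M"
    by (rule measurable_from_subalg[OF subalg assms(1)])
  have int: "integrable M (\<lambda>s. (G s \<bullet> i) * (i \<bullet> w s))" if "square_integrable M w" for w i
  proof -
    have "linear (\<lambda>v. (v \<bullet> i) *\<^sub>R i)" by (simp add: linearI algebra_simps inner_add_left)
    then have "square_integrable M (\<lambda>s. (G s \<bullet> i) *\<^sub>R i)"
      using assms(2) by (rule square_integrable_linear)
    from integrable_inner[OF this that] show ?thesis by simp
  qed
  have coordinate: "(\<integral>s. (G s \<bullet> i) * (i \<bullet> \<rho> s) \<partial>M) = (\<integral>s. (G s \<bullet> i) * (i \<bullet> r s) \<partial>M)" for i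
  proof -
    have "(\<integral>s. (G s \<bullet> i) * (i \<bullet> \<rho> s) \<partial>M)
        = (\<integral>s. (G s \<bullet> i) * real_cond_exp M F (\<lambda>s. i \<bullet> \<rho> s) s \<partial>M)"
      by (rule real_cond_exp_intg(2)[symmetric, OF int[OF assms(3)]]) measurable
    also have "\<dots> = (\<integral>s. (G s \<bullet> i) * (i \<bullet> r s) \<partial>M)"
    proof (rule integral_cong_AE)
      show "AE s in M. (G s \<bullet> i) * real_cond_exp M F (\<lambda>s. i \<bullet> \<rho> s) s = (G s \<bullet> i) * (i \<bullet> r s)"
        using cond_exp[of i] by eventually_elim simp
    qed measurable
    finally show ?thesis .
  qed
  have sum_eq: "(\<integral>s. G s \<bullet> w s \<partial>M) = (\<Sum>i\<in>Basis. \<integral>s. (G s \<bullet> i) * (i \<bullet> w s) \<partial>M)"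
    if "square_integrable M w" for w
  proof -
    have "G s \<bullet> w s = (\<Sum>i\<in>Basis. (G s \<bullet> i) * (i \<bullet> w s))" for s
      unfolding euclidean_inner[of "G s" "w s"] by (rule sum.cong) (simp_all add: inner_commute)
    then show ?thesis using int[OF that] by (simp add: Bochner_Integration.integral_sum)
  qed
  show ?thesis by (simp only: sum_eq[OF assms(3)] sum_eq[OF assms(4)] coordinate)
qed

end

lemma AE_tendsto_zero_of_summable_nn_integral:
  fixes Z :: "nat \<Rightarrow> 'a \<Rightarrow> real"
  assumes [measurable]: "\<And>t. Z t \<in> borel_measurable M" and Z_nonneg: "\<And>t s. 0 \<le> Z t s"
    and "summable B" "\<And>t. 0 \<le> B t" and "\<And>t. (\<integral>\<^sup>+s. ennreal (Z t s) \<partial>M) \<le> ennreal (B t)"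
  shows "AE s in M. (\<lambda>t. Z t s) \<longlonglongrightarrow> 0"
proof -
  have "(\<integral>\<^sup>+s. (\<Sum>t. ennreal (Z t s)) \<partial>M) = (\<Sum>t. \<integral>\<^sup>+s. ennreal (Z t s) \<partial>M)"
    by (rule nn_integral_suminf) measurable
  also have "\<dots> \<le> (\<Sum>t. ennreal (B t))"
    by (intro suminf_le summableI) (use assms in auto)
  also have "\<dots> = ennreal (\<Sum>t. B t)"
    by (rule suminf_ennreal2) (use assms in auto)
  also have "\<dots> < \<infinity>" by simp
  finally have "(\<integral>\<^sup>+s. (\<Sum>t. ennreal (Z t s)) \<partial>M) \<noteq> \<infinity>" by simp
  then have "AE s in M. (\<Sum>t. ennreal (Z t s)) \<noteq> \<infinity>"
    by (intro nn_integral_PInf_AE) measurable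
  then show ?thesis
  proof (rule AE_mp, intro AE_I2 impI)
    fix s assume "(\<Sum>t. ennreal (Z t s)) \<noteq> \<infinity>"
    then have "summable (\<lambda>t. Z t s)" using Z_nonneg by (intro summable_suminf_not_top) auto
    then show "(\<lambda>t. Z t s) \<longlonglongrightarrow> 0" by (rule summable_LIMSEQ_zero)
  qed
qed

lemma tendsto_of_norm_sq_le:
  fixes v :: "nat \<Rightarrow> 'a::real_normed_vector"
  assumes "h \<longlonglongrightarrow> 0" and "\<And>t. (norm (v t - l))\<^sup>2 \<le> C * h t"
  shows "v \<longlonglongrightarrow> l"
proof -
  have "(\<lambda>t. (norm (v t - l))\<^sup>2) \<longlonglongrightarrow> 0"
  proof (rule real_tendsto_sandwich[where f="\<lambda>_. 0" and h="\<lambda>t. C * h t"])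
    show "\<forall>\<^sub>F t in sequentially. (norm (v t - l))\<^sup>2 \<le> C * h t" using assms(2) by simp
    show "(\<lambda>t. C * h t) \<longlonglongrightarrow> 0" using tendsto_mult_right_zero[OF assms(1)] by simp
  qed simp_all
  then have "(\<lambda>t. sqrt ((norm (v t - l))\<^sup>2)) \<longlonglongrightarrow> sqrt 0" by (rule tendsto_real_sqrt)
  then show ?thesis by (simp add: tendsto_norm_zero_iff LIM_zero_iff)
qed

section \<open>The filtration generated by the iterates\<close>

context
  fixes M :: "'w measure"
    and x :: "nat \<Rightarrow> 'w \<Rightarrow> 'x::second_countable_topology"
    and u :: "nat \<Rightarrow> 'w \<Rightarrow> 'u::second_countable_topology"
begin

lemma gen_filtr_generator_Pow:
  "{(\<lambda>s. (x i s, u i s)) -` B \<inter> space M | i B. i \<le> t \<and> B \<in> sets borel} \<subseteq> Pow (space M)"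
  by auto

lemma space_gen_filtr: "space (gen_filtr M x u t) = space M"
  unfolding gen_filtr_def by (simp add: space_measure_of_conv)

lemma sets_gen_filtr: "sets (gen_filtr M x u t)
    = sigma_sets (space M) {(\<lambda>s. (x i s, u i s)) -` B \<inter> space M | i B. i \<le> t \<and> B \<in> sets borel}"
  unfolding gen_filtr_def using gen_filtr_generator_Pow by (simp add: sets_measure_of)

lemma subalgebra_gen_filtr:
  assumes "\<And>i. x i \<in> borel_measurable M" "\<And>i. u i \<in> borel_measurable M"
  shows "subalgebra M (gen_filtr M x u t)"
  unfolding subalgebra_def space_gen_filtr sets_gen_filtr
proof (intro conjI refl sets.sigma_sets_subset subsetI)
  fix A assume "A \<in> {(\<lambda>s. (x i s, u i s)) -` B \<inter> space M | i B. i \<le> t \<and> B \<in> sets borel}"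
  then obtain i B where "A = (\<lambda>s. (x i s, u i s)) -` B \<inter> space M" "B \<in> sets borel" by blast
  moreover have "(\<lambda>s. (x i s, u i s)) \<in> borel_measurable M"
    using assms by measurable
  ultimately show "A \<in> sets M" by (simp add: measurable_sets)
qed

lemma measurable_gen_filtr:
  assumes "i \<le> t"
  shows "x i \<in> borel_measurable (gen_filtr M x u t)" and "u i \<in> borel_measurable (gen_filtr M x u t)"
proof -
  have pair: "(\<lambda>s. (x i s, u i s)) \<in> borel_measurable (gen_filtr M x u t)"
  proof (rule measurableI)
    fix B :: "('x \<times> 'u) set" assume "B \<in> sets borel"
    with assms show "(\<lambda>s. (x i s, u i s)) -` B \<inter> space (gen_filtr M x u t) \<in> sets (gen_filtr M x u t)"
      unfolding space_gen_filtr sets_gen_filtr by blast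
  qed simp
  have "fst \<in> borel_measurable (borel :: ('x \<times> 'u) measure)"
    "snd \<in> borel_measurable (borel :: ('x \<times> 'u) measure)"
    by (auto intro!: borel_measurable_continuous_onI continuous_intros)
  from this[THEN measurable_compose[OF pair]]
  show "x i \<in> borel_measurable (gen_filtr M x u t)" "u i \<in> borel_measurable (gen_filtr M x u t)"
    by simp_all
qed

end

lemma (in finite_measure) sigma_finite_subalgebra_gen_filtr:
  fixes x :: "nat \<Rightarrow> 'a \<Rightarrow> 'x::second_countable_topology"
    and u :: "nat \<Rightarrow> 'a \<Rightarrow> 'u::second_countable_topology"
  assumes "\<And>i. x i \<in> borel_measurable M" "\<And>i. u i \<in> borel_measurable M"
  shows "sigma_finite_subalgebra M (gen_filtr M x u t)"
  by (intro finite_measure_subalgebra_is_sigma_finite)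
    (simp add: finite_measure_subalgebra_def finite_measure_subalgebra_axioms_def
      subalgebra_gen_filtr[OF assms] finite_measure_axioms)

section \<open>One step of RandProx-LC\<close>

locale randprox_lc_setting = smooth_strongly_convex f gf Lf muf
  for f :: "'x::euclidean_space \<Rightarrow> real" and gf Lf muf +
  fixes K :: "'x \<Rightarrow> 'u::euclidean_space" and b :: 'u
    and \<gamma> \<tau> om om_ran \<zeta> :: real and xs :: 'x and us0 :: 'u
  assumes linear_K: "linear K" and K_nonzero: "K \<noteq> (\<lambda>_. 0)"
    and gamma_pos: "\<gamma> > 0" and gamma_less: "\<gamma> < 2 / Lf"
    and tau_pos: "\<tau> > 0" and om_nonneg: "om \<ge> 0"
    and zeta_nonneg: "0 \<le> \<zeta>" and zeta_le_1: "\<zeta> \<le> 1"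
    and step_size: "\<gamma> * \<tau> * ((1 - \<zeta>) * (onorm K)\<^sup>2 + om_ran) \<le> 1"
    and xs_feasible: "K xs = b" and xs_optimal: "\<And>y. K y = b \<Longrightarrow> f xs \<le> f y"
    and us0_range: "us0 \<in> range K"
    and us0_optimal: "\<And>v. fconj f (- adjoint K us0) + us0 \<bullet> b \<le> fconj f (- adjoint K v) + v \<bullet> b"
begin

lemma linear_adjoint_K: "linear (adjoint K)"
  by (rule adjoint_linear[OF linear_K])

lemma optimality_condition: "gf xs = - adjoint K us0"
proof -
  have "gf xs \<bullet> h = 0" if "K h = 0" for h
  proof (rule gradient_inner_eq_of_line_bound)
    show "f xs + s * 0 \<le> f (xs + s *\<^sub>R h)" for s
      using that by (simp add: xs_optimal linear_add[OF linear_K] linear_scale[OF linear_K] xs_feasible)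
  qed
  then obtain w where w: "gf xs = adjoint K w"
    using orthogonal_kernel_imp_in_range_adjoint[OF linear_K] by blast
  \<comment> \<open>\<open>- w\<close> attains the primal value, so the dual minimality of \<open>us0\<close> makes \<open>xs\<close> maximise \<open>g \<bullet> y - f y\<close>\<close>
  define g where "g = - adjoint K us0"
  have "fconj f (- adjoint K (- w)) + (- w) \<bullet> b = - f xs"
  proof -
    have "fconj f (adjoint K w) = xs \<bullet> adjoint K w - f xs"
      using fconj_gradient[of xs] w by (simp add: inner_commute)
    also have "xs \<bullet> adjoint K w = b \<bullet> w"
      by (simp add: adjoint_works[OF linear_K] xs_feasible)
    finally show ?thesis by (simp add: linear_neg[OF linear_adjoint_K] inner_commute)
  qed
  moreover have "us0 \<bullet> b = - (g \<bullet> xs)"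
    using xs_feasible by (simp add: g_def adjoint_works[OF linear_K] inner_commute)
  ultimately have "fconj f g \<le> g \<bullet> xs - f xs"
    using us0_optimal[of "- w"] by (simp add: g_def)
  then show ?thesis
    unfolding g_def by (rule gradient_eq_of_fconj_le)
qed

definition rate :: real where
  "rate = max ((1 - \<gamma> * muf)\<^sup>2) (max ((\<gamma> * Lf - 1)\<^sup>2) (1 - \<gamma> * \<tau> * lambda_min_pos K / (1 + om)))"

lemma rate_nonneg: "rate \<ge> 0"
  unfolding rate_def by (rule order_trans[OF zero_le_power2 max.cobounded1])

lemma rate_less_1: "rate < 1"
proof -
  have "0 < \<gamma> * Lf" "\<gamma> * Lf < 2"
    using gamma_pos L_pos gamma_less by (auto simp: field_simps)
  moreover have "0 < \<gamma> * muf" "\<gamma> * muf \<le> \<gamma> * Lf"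
    using gamma_pos mu_pos mu_le_L by auto
  moreover have "0 < \<gamma> * \<tau> * lambda_min_pos K / (1 + om)"
    using gamma_pos tau_pos lambda_min_pos_pos[OF linear_K K_nonzero] om_nonneg by simp
  ultimately show ?thesis by (simp add: rate_def abs_square_less_1 abs_less_iff)
qed

definition kappa :: real where "kappa = \<tau> / (1 + om)"

lemma kappa_pos: "kappa > 0"
  using tau_pos om_nonneg by (simp add: kappa_def)

definition lyapunov :: "'x \<Rightarrow> 'u \<Rightarrow> real" where
  "lyapunov z v = (1 / \<gamma>) * (norm (z - xs))\<^sup>2 + ((1 + om) / \<tau>) * (norm (proj_ran K v - us0))\<^sup>2"

lemma lyapunov_nonneg: "lyapunov z v \<ge> 0"
  using gamma_pos tau_pos om_nonneg by (simp add: lyapunov_def)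

lemma norm_sq_le_lyapunov:
  shows "(norm (z - xs))\<^sup>2 \<le> \<gamma> * lyapunov z v"
    and "(norm (proj_ran K v - us0))\<^sup>2 \<le> kappa * lyapunov z v"
proof -
  have "(norm (z - xs))\<^sup>2 = \<gamma> * ((1 / \<gamma>) * (norm (z - xs))\<^sup>2)"
    using gamma_pos by simp
  also have "\<dots> \<le> \<gamma> * lyapunov z v"
    using gamma_pos tau_pos om_nonneg by (intro mult_left_mono) (simp_all add: lyapunov_def)
  finally show "(norm (z - xs))\<^sup>2 \<le> \<gamma> * lyapunov z v" .
  have "(norm (proj_ran K v - us0))\<^sup>2 = kappa * (((1 + om) / \<tau>) * (norm (proj_ran K v - us0))\<^sup>2)"
    using tau_pos om_nonneg by (simp add: kappa_def)
  also have "\<dots> \<le> kappa * lyapunov z v"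
    using gamma_pos kappa_pos by (intro mult_left_mono) (simp_all add: lyapunov_def)
  finally show "(norm (proj_ran K v - us0))\<^sup>2 \<le> kappa * lyapunov z v" .
qed

definition forward_step :: "'x \<Rightarrow> 'u \<Rightarrow> 'x" where
  "forward_step z v = z - \<gamma> *\<^sub>R gf z - \<gamma> *\<^sub>R adjoint K v"

definition residual :: "'x \<Rightarrow> 'u \<Rightarrow> 'u" where
  "residual z v = K (forward_step z v) - b"

definition dual_err :: "'u \<Rightarrow> 'u" where
  "dual_err v = proj_ran K v - us0"

text \<open>Bound for the Lyapunov function after a step with estimate \<open>R\<close> (\<open>lyapunov_step_le\<close>);
  being quadratic in \<open>R\<close>, its conditional mean depends only on the mean and variance of \<open>R\<close>.\<close>
definition quadratic_bound :: "'x \<Rightarrow> 'u \<Rightarrow> 'u \<Rightarrow> real" where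
  "quadratic_bound z v R = (1 / \<gamma>) * (norm (forward_step z v - xs - (\<gamma> * \<tau>) *\<^sub>R adjoint K R))\<^sup>2
     + ((1 + om) / \<tau>) * (norm (dual_err v))\<^sup>2 + 2 * (dual_err v \<bullet> R) + kappa * (norm R)\<^sup>2"

definition quadratic_bound_grad :: "'x \<Rightarrow> 'u \<Rightarrow> 'u" where
  "quadratic_bound_grad z v = 2 *\<^sub>R dual_err v + (2 * kappa - 2 * \<tau>) *\<^sub>R residual z v
     + (2 * \<gamma> * \<tau>\<^sup>2) *\<^sub>R K (adjoint K (residual z v))"

lemma dual_err_in_range: "dual_err v \<in> range K"
  using proj_ran_in_range[OF linear_K] us0_range subspace_range_linear[OF linear_K]
  by (simp add: dual_err_def subspace_diff)

lemma forward_step_minus_xs: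
  "forward_step z v - xs = ((z - \<gamma> *\<^sub>R gf z) - (xs - \<gamma> *\<^sub>R gf xs)) - \<gamma> *\<^sub>R adjoint K (dual_err v)"
proof -
  have "adjoint K v = adjoint K (dual_err v + us0)"
    by (simp add: dual_err_def adjoint_proj_ran[OF linear_K])
  also have "\<dots> = adjoint K (dual_err v) - gf xs"
    by (simp add: linear_add[OF linear_adjoint_K] optimality_condition)
  finally have adj: "adjoint K v = adjoint K (dual_err v) - gf xs" .
  show ?thesis
    unfolding forward_step_def adj by (simp add: algebra_simps)
qed

lemma K_forward_step_minus_xs: "K (forward_step z v - xs) = residual z v"
  by (simp add: residual_def linear_diff[OF linear_K] xs_feasible)

lemma lyapunov_step_le:
  "lyapunov (forward_step z v - (\<gamma> * (1 + om)) *\<^sub>R (adjoint K (v + kappa *\<^sub>R R) - adjoint K v))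
            (v + kappa *\<^sub>R R)
   \<le> quadratic_bound z v R"
proof -
  let ?P = "proj_ran K"
  have "adjoint K (v + kappa *\<^sub>R R) - adjoint K v = kappa *\<^sub>R adjoint K R"
    by (simp add: linear_add[OF linear_adjoint_K] linear_scale[OF linear_adjoint_K])
  moreover have "\<gamma> * (1 + om) * kappa = \<gamma> * \<tau>"
    using om_nonneg by (simp add: kappa_def)
  ultimately have x_eq: "forward_step z v - (\<gamma> * (1 + om)) *\<^sub>R (adjoint K (v + kappa *\<^sub>R R) - adjoint K v) - xs
      = forward_step z v - xs - (\<gamma> * \<tau>) *\<^sub>R adjoint K R"
    by (simp add: algebra_simps)
  moreover have u_eq: "?P (v + kappa *\<^sub>R R) - us0 = dual_err v + kappa *\<^sub>R ?P R"
    using linear_add[OF linear_proj_ran[OF linear_K]] linear_scale[OF linear_proj_ran[OF linear_K]]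
    by (simp add: dual_err_def)
  moreover have "((1 + om) / \<tau>) * (norm (dual_err v + kappa *\<^sub>R ?P R))\<^sup>2
      \<le> ((1 + om) / \<tau>) * (norm (dual_err v))\<^sup>2 + 2 * (dual_err v \<bullet> R) + kappa * (norm R)\<^sup>2"
  proof -
    have c_kappa: "((1 + om) / \<tau>) * kappa = 1" using tau_pos om_nonneg by (simp add: kappa_def)
    have "((1 + om) / \<tau>) * (norm (dual_err v + kappa *\<^sub>R ?P R))\<^sup>2
        = ((1 + om) / \<tau>) * ((norm (dual_err v))\<^sup>2 + 2 * kappa * (dual_err v \<bullet> ?P R) + kappa\<^sup>2 * (norm (?P R))\<^sup>2)"
      by (simp add: power2_norm_add power_mult_distrib mult.assoc)
    also have "\<dots> = ((1 + om) / \<tau>) * (norm (dual_err v))\<^sup>2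
        + 2 * (((1 + om) / \<tau>) * kappa) * (dual_err v \<bullet> ?P R) + (((1 + om) / \<tau>) * kappa) * kappa * (norm (?P R))\<^sup>2"
      by (simp add: algebra_simps power2_eq_square)
    finally have "((1 + om) / \<tau>) * (norm (dual_err v + kappa *\<^sub>R ?P R))\<^sup>2
        = ((1 + om) / \<tau>) * (norm (dual_err v))\<^sup>2 + 2 * (dual_err v \<bullet> ?P R) + kappa * (norm (?P R))\<^sup>2"
      unfolding c_kappa by simp
    moreover have "dual_err v \<bullet> ?P R = dual_err v \<bullet> R"
      by (rule inner_proj_ran[OF linear_K dual_err_in_range])
    moreover have "kappa * (norm (?P R))\<^sup>2 \<le> kappa * (norm R)\<^sup>2"
      using kappa_pos norm_proj_ran_le[OF linear_K, of R] by (simp add: power_mono)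
    ultimately show ?thesis by simp
  qed
  ultimately show ?thesis
    unfolding lyapunov_def quadratic_bound_def x_eq u_eq by simp
qed

lemma quadratic_bound_expand:
  "quadratic_bound z v (residual z v + e) = quadratic_bound z v (residual z v)
     + quadratic_bound_grad z v \<bullet> e + \<gamma> * \<tau>\<^sup>2 * (norm (adjoint K e))\<^sup>2 + kappa * (norm e)\<^sup>2"
proof -
  let ?r = "residual z v" and ?A = "adjoint K"
  define w where "w = forward_step z v - xs - (\<gamma> * \<tau>) *\<^sub>R ?A ?r"
  have "forward_step z v - xs - (\<gamma> * \<tau>) *\<^sub>R ?A (?r + e) = w - (\<gamma> * \<tau>) *\<^sub>R ?A e"
    by (simp add: w_def linear_add[OF linear_adjoint_K] algebra_simps)
  then have "(1 / \<gamma>) * (norm (forward_step z v - xs - (\<gamma> * \<tau>) *\<^sub>R ?A (?r + e)))\<^sup>2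
      = (1 / \<gamma>) * (norm w)\<^sup>2 - 2 * \<tau> * (w \<bullet> ?A e) + \<gamma> * \<tau>\<^sup>2 * (norm (?A e))\<^sup>2"
    by (simp only: power2_norm_diff_scaled[OF gamma_pos])
  moreover have "w \<bullet> ?A e = ?r \<bullet> e - \<gamma> * \<tau> * (K (?A ?r) \<bullet> e)"
  proof -
    have "K w = K (forward_step z v - xs) - (\<gamma> * \<tau>) *\<^sub>R K (?A ?r)"
      by (simp only: w_def linear_diff[OF linear_K, of "forward_step z v - xs"] linear_scale[OF linear_K])
    then have "K w = ?r - (\<gamma> * \<tau>) *\<^sub>R K (?A ?r)"
      by (simp only: K_forward_step_minus_xs)
    then show ?thesis by (simp add: adjoint_works[OF linear_K] inner_diff_left)
  qed
  ultimately have "(1 / \<gamma>) * (norm (forward_step z v - xs - (\<gamma> * \<tau>) *\<^sub>R ?A (?r + e)))\<^sup>2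
      = (1 / \<gamma>) * (norm w)\<^sup>2 - 2 * \<tau> * (?r \<bullet> e - \<gamma> * \<tau> * (K (?A ?r) \<bullet> e)) + \<gamma> * \<tau>\<^sup>2 * (norm (?A e))\<^sup>2"
    by simp
  then show ?thesis
    unfolding quadratic_bound_def quadratic_bound_grad_def w_def[symmetric]
    by (simp add: power2_norm_add inner_add_right inner_add_left algebra_simps inner_commute
        power2_eq_square[of \<tau>])
qed

lemma step_size_bound:
  "\<gamma> * \<tau>\<^sup>2 * ((1 - \<zeta>) * (norm (adjoint K r))\<^sup>2 + om_ran * (norm r)\<^sup>2) \<le> \<tau> * (norm r)\<^sup>2"
proof -
  have "(norm (adjoint K r))\<^sup>2 \<le> (onorm K)\<^sup>2 * (norm r)\<^sup>2"
    using power_mono[OF norm_adjoint_le_onorm[OF linear_K, of r] norm_ge_zero, of 2]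
    by (simp add: power_mult_distrib)
  then have "\<gamma> * \<tau>\<^sup>2 * ((1 - \<zeta>) * (norm (adjoint K r))\<^sup>2 + om_ran * (norm r)\<^sup>2)
      \<le> \<gamma> * \<tau>\<^sup>2 * ((1 - \<zeta>) * ((onorm K)\<^sup>2 * (norm r)\<^sup>2) + om_ran * (norm r)\<^sup>2)"
    using gamma_pos zeta_le_1 by (intro mult_left_mono add_right_mono) auto
  also have "\<dots> = \<tau> * (norm r)\<^sup>2 * (\<gamma> * \<tau> * ((1 - \<zeta>) * (onorm K)\<^sup>2 + om_ran))"
    by (simp add: algebra_simps power2_eq_square)
  also have "\<dots> \<le> \<tau> * (norm r)\<^sup>2"
    using step_size tau_pos by (simp add: mult_left_le)
  finally show ?thesis .
qed

lemma primal_dual_contraction: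
  "(1 / \<gamma>) * (norm (forward_step z v - xs))\<^sup>2 + 2 * (dual_err v \<bullet> residual z v)
     + ((1 + om) / \<tau>) * (norm (dual_err v))\<^sup>2 \<le> rate * lyapunov z v"
proof -
  let ?D = "dual_err v" and ?A = "adjoint K"
  define w where "w = (z - \<gamma> *\<^sub>R gf z) - (xs - \<gamma> *\<^sub>R gf xs)"
  define lam where "lam = lambda_min_pos K"
  have a_eq: "forward_step z v - xs = w - \<gamma> *\<^sub>R ?A ?D"
    by (simp add: w_def forward_step_minus_xs)
  \<comment> \<open>the cross term \<open>2 D \<bullet> r\<close> completes the square in \<open>w\<close>\<close>
  have "?D \<bullet> residual z v = ?D \<bullet> K (forward_step z v - xs)"
    by (simp only: K_forward_step_minus_xs)
  also have "\<dots> = (forward_step z v - xs) \<bullet> ?A ?D"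
    using adjoint_works[OF linear_K, of "forward_step z v - xs" ?D] by (simp only: inner_commute)
  also have "\<dots> = w \<bullet> ?A ?D - \<gamma> * (norm (?A ?D))\<^sup>2"
    unfolding a_eq by (simp add: inner_diff_left power2_norm_eq_inner)
  finally have cross: "?D \<bullet> residual z v = w \<bullet> ?A ?D - \<gamma> * (norm (?A ?D))\<^sup>2" .
  have "(1 / \<gamma>) * (norm (forward_step z v - xs))\<^sup>2
      = (1 / \<gamma>) * (norm w)\<^sup>2 - 2 * (w \<bullet> ?A ?D) + \<gamma> * (norm (?A ?D))\<^sup>2"
    using power2_norm_diff_scaled[OF gamma_pos, of w 1 "?A ?D"] by (simp add: a_eq)
  with cross have "(1 / \<gamma>) * (norm (forward_step z v - xs))\<^sup>2 + 2 * (?D \<bullet> residual z v)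
      = (1 / \<gamma>) * (norm w)\<^sup>2 - \<gamma> * (norm (?A ?D))\<^sup>2"
    by linarith
  also have "\<dots> \<le> (1 / \<gamma>) * (rate * (norm (z - xs))\<^sup>2) - \<gamma> * (lam * (norm ?D)\<^sup>2)"
  proof -
    have "max ((1 - \<gamma> * muf)\<^sup>2) ((\<gamma> * Lf - 1)\<^sup>2) \<le> rate"
      unfolding rate_def by (intro max.mono order_refl max.cobounded1)
    then have "(norm w)\<^sup>2 \<le> rate * (norm (z - xs))\<^sup>2"
      using gradient_step_contraction[OF gamma_pos, of z xs] unfolding w_def
      by (meson mult_right_mono order_trans zero_le_power2)
    moreover have "lam * (norm ?D)\<^sup>2 \<le> (norm (?A ?D))\<^sup>2"
      unfolding lam_def by (rule lambda_min_pos_le_norm_adjoint[OF linear_K K_nonzero dual_err_in_range])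
    ultimately show ?thesis
      using gamma_pos by (intro diff_mono mult_left_mono) auto
  qed
  finally have "(1 / \<gamma>) * (norm (forward_step z v - xs))\<^sup>2 + 2 * (?D \<bullet> residual z v)
      + ((1 + om) / \<tau>) * (norm ?D)\<^sup>2
      \<le> rate * ((1 / \<gamma>) * (norm (z - xs))\<^sup>2) + ((1 + om) / \<tau> - \<gamma> * lam) * (norm ?D)\<^sup>2"
    by (simp add: algebra_simps)
  also have "((1 + om) / \<tau> - \<gamma> * lam) * (norm ?D)\<^sup>2 \<le> rate * ((1 + om) / \<tau>) * (norm ?D)\<^sup>2"
  proof (rule mult_right_mono)
    have "((1 + om) / \<tau>) * (\<gamma> * \<tau> * lam / (1 + om)) = \<gamma> * lam"
      using tau_pos om_nonneg by simp
    then have "(1 + om) / \<tau> - \<gamma> * lam = ((1 + om) / \<tau>) * (1 - \<gamma> * \<tau> * lam / (1 + om))"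
      by (simp add: right_diff_distrib)
    also have "\<dots> \<le> ((1 + om) / \<tau>) * rate"
      using tau_pos om_nonneg by (intro mult_left_mono) (auto simp: rate_def lam_def)
    finally show "(1 + om) / \<tau> - \<gamma> * lam \<le> rate * ((1 + om) / \<tau>)" by (simp add: mult.commute)
  qed simp
  finally show ?thesis
    by (simp add: lyapunov_def dual_err_def algebra_simps)
qed

lemma quadratic_bound_residual_le:
  "quadratic_bound z v (residual z v)
     + \<gamma> * \<tau>\<^sup>2 * (om_ran * (norm (residual z v))\<^sup>2 - \<zeta> * (norm (adjoint K (residual z v)))\<^sup>2)
     + kappa * (om * (norm (residual z v))\<^sup>2)
   \<le> rate * lyapunov z v"
proof -
  let ?r = "residual z v" and ?A = "adjoint K"
  define a where "a = forward_step z v - xs"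
  have "a \<bullet> ?A ?r = (norm ?r)\<^sup>2"
    by (simp add: a_def adjoint_works[OF linear_K] K_forward_step_minus_xs power2_norm_eq_inner)
  then have "(1 / \<gamma>) * (norm (a - (\<gamma> * \<tau>) *\<^sub>R ?A ?r))\<^sup>2
      = (1 / \<gamma>) * (norm a)\<^sup>2 - 2 * \<tau> * (norm ?r)\<^sup>2 + \<gamma> * \<tau>\<^sup>2 * (norm (?A ?r))\<^sup>2"
    by (simp only: power2_norm_diff_scaled[OF gamma_pos])
  moreover have "kappa * (norm ?r)\<^sup>2 + om * (kappa * (norm ?r)\<^sup>2) = \<tau> * (norm ?r)\<^sup>2"
  proof -
    have "kappa * (norm ?r)\<^sup>2 + om * (kappa * (norm ?r)\<^sup>2) = (kappa * (1 + om)) * (norm ?r)\<^sup>2"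
      by (simp add: algebra_simps)
    also have "kappa * (1 + om) = \<tau>" using om_nonneg by (simp add: kappa_def)
    finally show ?thesis .
  qed
  ultimately show ?thesis
    using primal_dual_contraction[of z v] step_size_bound[of ?r]
    unfolding quadratic_bound_def a_def[symmetric] by (simp add: algebra_simps)
qed

end

section \<open>Convergence of RandProx-LC\<close>

locale randprox_lc = randprox_lc_setting f gf Lf muf K b \<gamma> \<tau> om om_ran \<zeta> xs us0 + prob_space M
  for f :: "'x::euclidean_space \<Rightarrow> real" and gf Lf muf and K :: "'x \<Rightarrow> 'u::euclidean_space"
    and b \<gamma> \<tau> om om_ran \<zeta> xs us0 and M :: "'w measure" +
  fixes x xh :: "nat \<Rightarrow> 'w \<Rightarrow> 'x" and u \<rho> :: "nat \<Rightarrow> 'w \<Rightarrow> 'u" and x0 :: 'x and u0 :: 'u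
  assumes om_ran_nonneg: "om_ran \<ge> 0"
    and x_0: "\<And>s. x 0 s = x0" and u_0: "\<And>s. u 0 s = u0"
    and xh_eq: "\<And>t s. xh t s = x t s - \<gamma> *\<^sub>R gf (x t s) - \<gamma> *\<^sub>R adjoint K (u t s)"
    and u_Suc: "\<And>t s. u (Suc t) s = u t s + (\<tau> / (1 + om)) *\<^sub>R \<rho> t s"
    and x_Suc: "\<And>t s. x (Suc t) s = xh t s
                   - (\<gamma> * (1 + om)) *\<^sub>R (adjoint K (u (Suc t) s) - adjoint K (u t s))"
    and measurable_\<rho>: "\<And>t. \<rho> t \<in> borel_measurable M"
    and \<rho>_unbiased: "\<And>t a. AE s in M.
          real_cond_exp M (gen_filtr M x u t) (\<lambda>s. a \<bullet> \<rho> t s) s = a \<bullet> (K (xh t s) - b)"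
    and \<rho>_variance: "\<And>t. AE s in M.
          nn_cond_exp M (gen_filtr M x u t)
             (\<lambda>s. ennreal ((norm (\<rho> t s - (K (xh t s) - b)))\<^sup>2)) s
          \<le> ennreal (om * (norm (K (xh t s) - b))\<^sup>2)"
    and \<rho>_variance_range: "\<And>t. AE s in M.
          nn_cond_exp M (gen_filtr M x u t)
             (\<lambda>s. ennreal ((norm (adjoint K (\<rho> t s - (K (xh t s) - b))))\<^sup>2)) s
          + ennreal (\<zeta> * (norm (adjoint K (K (xh t s) - b)))\<^sup>2)
          \<le> ennreal (om_ran * (norm (K (xh t s) - b))\<^sup>2)"
begin

lemma xh_eq_forward_step: "xh t s = forward_step (x t s) (u t s)"
  by (simp add: xh_eq forward_step_def)

lemma residual_eq: "residual (x t s) (u t s) = K (xh t s) - b"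
  by (simp add: residual_def xh_eq_forward_step)

lemma lyapunov_Suc_le:
  "lyapunov (x (Suc t) s) (u (Suc t) s) \<le> quadratic_bound (x t s) (u t s) (\<rho> t s)"
  using lyapunov_step_le[of "x t s" "u t s" "\<rho> t s"]
  by (simp add: x_Suc u_Suc xh_eq_forward_step kappa_def)

lemma continuous_on_gf: "continuous_on UNIV gf"
proof (rule lipschitz_on_continuous_on)
  show "Lf-lipschitz_on UNIV gf"
    by (rule lipschitz_onI) (use lipschitz_gf L_pos in \<open>auto simp: dist_norm\<close>)
qed

lemma borel_measurable_maps [measurable]:
  "gf \<in> borel_measurable borel" "K \<in> borel_measurable borel"
  "adjoint K \<in> borel_measurable borel" "proj_ran K \<in> borel_measurable borel"
  by (auto intro: borel_measurable_continuous_onI continuous_on_gf borel_measurable_linear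
      linear_K linear_adjoint_K linear_proj_ran[OF linear_K])

lemma measurable_iterates: "x t \<in> borel_measurable M \<and> u t \<in> borel_measurable M"
proof (induction t)
  case 0
  then show ?case by (simp add: x_0[abs_def] u_0[abs_def])
next
  case (Suc t)
  then have [measurable]: "x t \<in> borel_measurable M" "u t \<in> borel_measurable M" by auto
  note [measurable] = measurable_\<rho>
  show ?case
    unfolding x_Suc[abs_def] u_Suc[abs_def] xh_eq by measurable
qed

lemma measurable_x [measurable]: "x t \<in> borel_measurable M"
  and measurable_u [measurable]: "u t \<in> borel_measurable M"
  using measurable_iterates by blast+

lemma measurable_xh [measurable]: "xh t \<in> borel_measurable M"
  unfolding xh_eq[abs_def] by measurable

lemma sigma_finite_subalgebra_F: "sigma_finite_subalgebra M (gen_filtr M x u t)"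
  by (rule sigma_finite_subalgebra_gen_filtr) simp_all

lemma square_integrable_of_le_lyapunov:
  assumes "integrable M (\<lambda>s. lyapunov (x t s) (u t s))"
    and [measurable]: "w \<in> borel_measurable M"
    and "\<And>s. (norm (w s))\<^sup>2 \<le> C * lyapunov (x t s) (u t s)"
  shows "square_integrable M w"
  unfolding square_integrable_def
proof
  have meas: "(\<lambda>s. (norm (w s))\<^sup>2) \<in> borel_measurable M" by measurable
  have int: "integrable M (\<lambda>s. C * lyapunov (x t s) (u t s))"
    using assms(1) by (rule integrable_mult_right)
  show "integrable M (\<lambda>s. (norm (w s))\<^sup>2)"
    by (rule integrable_abs_le[OF int meas]) (simp add: assms(3))
qed (rule assms(2))

lemma square_integrable_iterate_terms:
  assumes "integrable M (\<lambda>s. lyapunov (x t s) (u t s))"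
  shows "square_integrable M (\<lambda>s. K (xh t s) - b)"
    and "square_integrable M (\<lambda>s. quadratic_bound_grad (x t s) (u t s))"
    and "integrable M (\<lambda>s. quadratic_bound (x t s) (u t s) (K (xh t s) - b))"
proof -
  have sq_x: "square_integrable M (\<lambda>s. x t s - xs)"
    by (rule square_integrable_of_le_lyapunov[OF assms, where C = \<gamma>], measurable,
        rule norm_sq_le_lyapunov(1))
  have sq_D: "square_integrable M (\<lambda>s. dual_err (u t s))"
    unfolding dual_err_def
    by (rule square_integrable_of_le_lyapunov[OF assms, where C = kappa], measurable,
        rule norm_sq_le_lyapunov(2))
  have sq_gf: "square_integrable M (\<lambda>s. gf (x t s) - gf xs)"
    by (rule square_integrable_le[OF _ sq_x], measurable, rule lipschitz_gf)
  have "square_integrable M (\<lambda>s. ((x t s - xs) - \<gamma> *\<^sub>R (gf (x t s) - gf xs)) - \<gamma> *\<^sub>R adjoint K (dual_err (u t s)))"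
    by (rule square_integrable_diff[OF square_integrable_diff[OF sq_x square_integrable_scaleR[OF sq_gf]]
          square_integrable_scaleR[OF square_integrable_linear[OF linear_adjoint_K sq_D]]])
  moreover have "((x t s - xs) - \<gamma> *\<^sub>R (gf (x t s) - gf xs)) - \<gamma> *\<^sub>R adjoint K (dual_err (u t s))
      = forward_step (x t s) (u t s) - xs" for s
    by (simp add: forward_step_minus_xs algebra_simps)
  ultimately have sq_a: "square_integrable M (\<lambda>s. forward_step (x t s) (u t s) - xs)"
    by simp
  have r_eq: "K (xh t s) - b = K (forward_step (x t s) (u t s) - xs)" for s
    by (simp add: K_forward_step_minus_xs residual_eq)
  show sq_r: "square_integrable M (\<lambda>s. K (xh t s) - b)"
    unfolding r_eq by (rule square_integrable_linear[OF linear_K sq_a])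
  show "square_integrable M (\<lambda>s. quadratic_bound_grad (x t s) (u t s))"
    unfolding quadratic_bound_grad_def residual_eq
    by (rule square_integrable_add[OF square_integrable_add[OF square_integrable_scaleR[OF sq_D]
          square_integrable_scaleR[OF sq_r]] square_integrable_scaleR[OF square_integrable_linear[OF
          linear_K square_integrable_linear[OF linear_adjoint_K sq_r]]]])
  have sq_q: "square_integrable M
      (\<lambda>s. (forward_step (x t s) (u t s) - xs) - (\<gamma> * \<tau>) *\<^sub>R adjoint K (K (xh t s) - b))"
    by (rule square_integrable_diff[OF sq_a square_integrable_scaleR[OF square_integrable_linear[OF
          linear_adjoint_K sq_r]]])
  show "integrable M (\<lambda>s. quadratic_bound (x t s) (u t s) (K (xh t s) - b))"
    unfolding quadratic_bound_def
    by (intro Bochner_Integration.integrable_add integrable_mult_right integrable_norm_sq[OF sq_q]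
        integrable_norm_sq[OF sq_D] integrable_norm_sq[OF sq_r] integrable_inner[OF sq_D sq_r])
qed

lemma variance_bound:
  assumes "integrable M (\<lambda>s. lyapunov (x t s) (u t s))"
  defines "r \<equiv> \<lambda>s. K (xh t s) - b"
  shows "square_integrable M (\<lambda>s. \<rho> t s - r s)"
    and "(\<integral>s. (norm (\<rho> t s - r s))\<^sup>2 \<partial>M) \<le> om * (\<integral>s. (norm (r s))\<^sup>2 \<partial>M)"
proof -
  interpret F: sigma_finite_subalgebra M "gen_filtr M x u t"
    by (rule sigma_finite_subalgebra_F)
  note [measurable] = measurable_\<rho>
  have [measurable]: "r \<in> borel_measurable M"
    unfolding r_def by measurable
  have meas: "(\<lambda>s. (norm (\<rho> t s - r s))\<^sup>2) \<in> borel_measurable M"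
    by measurable
  have int_h: "integrable M (\<lambda>s. om * (norm (r s))\<^sup>2)"
    using integrable_norm_sq[OF square_integrable_iterate_terms(1)[OF assms(1)]]
    unfolding r_def by (rule integrable_mult_right)
  have h_nonneg: "0 \<le> om * (norm (r s))\<^sup>2" for s
    using om_nonneg by simp
  have "AE s in M. nn_cond_exp M (gen_filtr M x u t) (\<lambda>s. ennreal ((norm (\<rho> t s - r s))\<^sup>2)) s
      + ennreal 0 \<le> ennreal (om * (norm (r s))\<^sup>2)"
    using \<rho>_variance[of t] by (simp add: r_def)
  note F.integral_le_of_nn_cond_exp_le[OF meas zero_le_power2 integrable_zero order_refl int_h h_nonneg this]
  then show "square_integrable M (\<lambda>s. \<rho> t s - r s)"
    "(\<integral>s. (norm (\<rho> t s - r s))\<^sup>2 \<partial>M) \<le> om * (\<integral>s. (norm (r s))\<^sup>2 \<partial>M)"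
    by (simp_all add: square_integrable_def)
qed

lemma variance_range_bound:
  assumes "integrable M (\<lambda>s. lyapunov (x t s) (u t s))"
  defines "r \<equiv> \<lambda>s. K (xh t s) - b"
  shows "integrable M (\<lambda>s. (norm (adjoint K (\<rho> t s - r s)))\<^sup>2)"
    and "(\<integral>s. (norm (adjoint K (\<rho> t s - r s)))\<^sup>2 \<partial>M) + \<zeta> * (\<integral>s. (norm (adjoint K (r s)))\<^sup>2 \<partial>M)
         \<le> om_ran * (\<integral>s. (norm (r s))\<^sup>2 \<partial>M)"
proof -
  interpret F: sigma_finite_subalgebra M "gen_filtr M x u t"
    by (rule sigma_finite_subalgebra_F)
  note [measurable] = measurable_\<rho>
  have sq_r: "square_integrable M r"
    unfolding r_def by (rule square_integrable_iterate_terms(1)[OF assms(1)])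
  have [measurable]: "r \<in> borel_measurable M"
    unfolding r_def by measurable
  have meas: "(\<lambda>s. (norm (adjoint K (\<rho> t s - r s)))\<^sup>2) \<in> borel_measurable M"
    by measurable
  have int_h: "integrable M (\<lambda>s. om_ran * (norm (r s))\<^sup>2)"
    using integrable_norm_sq[OF sq_r] by (rule integrable_mult_right)
  have int_k: "integrable M (\<lambda>s. \<zeta> * (norm (adjoint K (r s)))\<^sup>2)"
    using integrable_norm_sq[OF square_integrable_linear[OF linear_adjoint_K sq_r]]
    by (rule integrable_mult_right)
  have h_nonneg: "0 \<le> om_ran * (norm (r s))\<^sup>2" and k_nonneg: "0 \<le> \<zeta> * (norm (adjoint K (r s)))\<^sup>2" for s
    using om_ran_nonneg zeta_nonneg by simp_all
  have "AE s in M. nn_cond_exp M (gen_filtr M x u t) (\<lambda>s. ennreal ((norm (adjoint K (\<rho> t s - r s)))\<^sup>2)) s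
      + ennreal (\<zeta> * (norm (adjoint K (r s)))\<^sup>2) \<le> ennreal (om_ran * (norm (r s))\<^sup>2)"
    using \<rho>_variance_range[of t] by (simp add: r_def)
  note F.integral_le_of_nn_cond_exp_le[OF meas zero_le_power2 int_k k_nonneg int_h h_nonneg this]
  then show "integrable M (\<lambda>s. (norm (adjoint K (\<rho> t s - r s)))\<^sup>2)"
    "(\<integral>s. (norm (adjoint K (\<rho> t s - r s)))\<^sup>2 \<partial>M) + \<zeta> * (\<integral>s. (norm (adjoint K (r s)))\<^sup>2 \<partial>M)
      \<le> om_ran * (\<integral>s. (norm (r s))\<^sup>2 \<partial>M)"
    by simp_all
qed

lemma integral_cross_term_eq_0:
  assumes "integrable M (\<lambda>s. lyapunov (x t s) (u t s))"
  shows "(\<integral>s. quadratic_bound_grad (x t s) (u t s) \<bullet> (\<rho> t s - (K (xh t s) - b)) \<partial>M) = 0"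
proof -
  interpret F: sigma_finite_subalgebra M "gen_filtr M x u t"
    by (rule sigma_finite_subalgebra_F)
  have [measurable]: "x t \<in> borel_measurable (gen_filtr M x u t)" "u t \<in> borel_measurable (gen_filtr M x u t)"
    by (rule measurable_gen_filtr[OF order_refl])+
  have G_F: "(\<lambda>s. quadratic_bound_grad (x t s) (u t s)) \<in> borel_measurable (gen_filtr M x u t)"
    unfolding quadratic_bound_grad_def residual_def forward_step_def dual_err_def by measurable
  note sq_r = square_integrable_iterate_terms(1)[OF assms]
    and sq_G = square_integrable_iterate_terms(2)[OF assms]
  have sq_\<rho>: "square_integrable M (\<rho> t)"
    using square_integrable_add[OF sq_r variance_bound(1)[OF assms]] by simp
  have "(\<integral>s. quadratic_bound_grad (x t s) (u t s) \<bullet> \<rho> t s \<partial>M)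
      = (\<integral>s. quadratic_bound_grad (x t s) (u t s) \<bullet> (K (xh t s) - b) \<partial>M)"
    by (rule F.integral_inner_eq_of_cond_exp[OF G_F sq_G sq_\<rho> sq_r \<rho>_unbiased])
  then show ?thesis
    using integrable_inner[OF sq_G sq_\<rho>] integrable_inner[OF sq_G sq_r]
    by (simp add: inner_diff_right)
qed

lemma integral_quadratic_bound_eq:
  assumes "integrable M (\<lambda>s. lyapunov (x t s) (u t s))"
  defines "r \<equiv> \<lambda>s. K (xh t s) - b"
  shows "integrable M (\<lambda>s. quadratic_bound (x t s) (u t s) (\<rho> t s))"
    and "(\<integral>s. quadratic_bound (x t s) (u t s) (\<rho> t s) \<partial>M)
      = (\<integral>s. quadratic_bound (x t s) (u t s) (r s) \<partial>M)
        + \<gamma> * \<tau>\<^sup>2 * (\<integral>s. (norm (adjoint K (\<rho> t s - r s)))\<^sup>2 \<partial>M)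
        + kappa * (\<integral>s. (norm (\<rho> t s - r s))\<^sup>2 \<partial>M)"
proof -
  define e where "e s = \<rho> t s - r s" for s
  define G where "G s = quadratic_bound_grad (x t s) (u t s)" for s
  have expand: "quadratic_bound (x t s) (u t s) (\<rho> t s) = quadratic_bound (x t s) (u t s) (r s)
      + G s \<bullet> e s + \<gamma> * \<tau>\<^sup>2 * (norm (adjoint K (e s)))\<^sup>2 + kappa * (norm (e s))\<^sup>2" for s
    using quadratic_bound_expand[of "x t s" "u t s" "e s"]
    by (simp add: G_def e_def r_def residual_eq)
  have sq_G: "square_integrable M G"
    and int_Q: "integrable M (\<lambda>s. quadratic_bound (x t s) (u t s) (r s))"
    using square_integrable_iterate_terms(2,3)[OF assms(1)] by (simp_all add: r_def G_def[abs_def])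
  have sq_e: "square_integrable M e" and int_Ae: "integrable M (\<lambda>s. (norm (adjoint K (e s)))\<^sup>2)"
    using variance_bound(1)[OF assms(1)] variance_range_bound(1)[OF assms(1)]
    by (simp_all add: e_def[abs_def] r_def)
  have "(\<integral>s. G s \<bullet> e s \<partial>M) = 0"
    using integral_cross_term_eq_0[OF assms(1)] by (simp add: G_def e_def r_def)
  moreover note int_Q integrable_inner[OF sq_G sq_e] int_Ae integrable_norm_sq[OF sq_e]
  ultimately show "integrable M (\<lambda>s. quadratic_bound (x t s) (u t s) (\<rho> t s))"
    "(\<integral>s. quadratic_bound (x t s) (u t s) (\<rho> t s) \<partial>M)
      = (\<integral>s. quadratic_bound (x t s) (u t s) (r s) \<partial>M)
        + \<gamma> * \<tau>\<^sup>2 * (\<integral>s. (norm (adjoint K (\<rho> t s - r s)))\<^sup>2 \<partial>M)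
        + kappa * (\<integral>s. (norm (\<rho> t s - r s))\<^sup>2 \<partial>M)"
    unfolding expand e_def by simp_all
qed

lemma integral_quadratic_bound_le:
  assumes int: "integrable M (\<lambda>s. lyapunov (x t s) (u t s))"
  shows "(\<integral>s. quadratic_bound (x t s) (u t s) (\<rho> t s) \<partial>M) \<le> rate * (\<integral>s. lyapunov (x t s) (u t s) \<partial>M)"
proof -
  let ?r = "\<lambda>s. K (xh t s) - b"
  let ?B = "\<lambda>s. quadratic_bound (x t s) (u t s) (?r s)
    + \<gamma> * \<tau>\<^sup>2 * (om_ran * (norm (?r s))\<^sup>2 - \<zeta> * (norm (adjoint K (?r s)))\<^sup>2) + kappa * (om * (norm (?r s))\<^sup>2)"
  note sq_r = square_integrable_iterate_terms(1)[OF int]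
  note ints = square_integrable_iterate_terms(3)[OF int] integrable_norm_sq[OF sq_r]
    integrable_norm_sq[OF square_integrable_linear[OF linear_adjoint_K sq_r]]
  have "(\<integral>s. quadratic_bound (x t s) (u t s) (\<rho> t s) \<partial>M)
      = (\<integral>s. quadratic_bound (x t s) (u t s) (?r s) \<partial>M)
        + \<gamma> * \<tau>\<^sup>2 * (\<integral>s. (norm (adjoint K (\<rho> t s - ?r s)))\<^sup>2 \<partial>M)
        + kappa * (\<integral>s. (norm (\<rho> t s - ?r s))\<^sup>2 \<partial>M)"
    by (rule integral_quadratic_bound_eq(2)[OF int])
  also have "\<dots> \<le> (\<integral>s. quadratic_bound (x t s) (u t s) (?r s) \<partial>M)
        + \<gamma> * \<tau>\<^sup>2 * (om_ran * (\<integral>s. (norm (?r s))\<^sup>2 \<partial>M) - \<zeta> * (\<integral>s. (norm (adjoint K (?r s)))\<^sup>2 \<partial>M))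
        + kappa * (om * (\<integral>s. (norm (?r s))\<^sup>2 \<partial>M))"
    using variance_bound(2)[OF int] variance_range_bound(2)[OF int] gamma_pos kappa_pos
    by (intro add_mono mult_left_mono order_refl) auto
  also have "\<dots> = (\<integral>s. ?B s \<partial>M)"
    using ints by simp
  also have "\<dots> \<le> (\<integral>s. rate * lyapunov (x t s) (u t s) \<partial>M)"
  proof (rule integral_mono)
    show "integrable M ?B" using ints by simp
    show "integrable M (\<lambda>s. rate * lyapunov (x t s) (u t s))" using int by simp
    show "?B s \<le> rate * lyapunov (x t s) (u t s)" for s
      using quadratic_bound_residual_le[of "x t s" "u t s"] by (simp add: residual_eq)
  qed
  finally show ?thesis by simp
qed

lemma integral_lyapunov_Suc_le:
  assumes int: "integrable M (\<lambda>s. lyapunov (x t s) (u t s))"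
  shows "integrable M (\<lambda>s. lyapunov (x (Suc t) s) (u (Suc t) s))"
    and "(\<integral>s. lyapunov (x (Suc t) s) (u (Suc t) s) \<partial>M) \<le> rate * (\<integral>s. lyapunov (x t s) (u t s) \<partial>M)"
proof -
  note int_bound = integral_quadratic_bound_eq(1)[OF int]
  have meas: "(\<lambda>s. lyapunov (x (Suc t) s) (u (Suc t) s)) \<in> borel_measurable M"
    unfolding lyapunov_def by measurable
  show int_Suc: "integrable M (\<lambda>s. lyapunov (x (Suc t) s) (u (Suc t) s))"
    by (rule integrable_abs_le[OF int_bound meas]) (simp add: lyapunov_nonneg lyapunov_Suc_le)
  have "(\<integral>s. lyapunov (x (Suc t) s) (u (Suc t) s) \<partial>M) \<le> (\<integral>s. quadratic_bound (x t s) (u t s) (\<rho> t s) \<partial>M)"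
    by (rule integral_mono[OF int_Suc int_bound lyapunov_Suc_le])
  also have "\<dots> \<le> rate * (\<integral>s. lyapunov (x t s) (u t s) \<partial>M)"
    by (rule integral_quadratic_bound_le[OF int])
  finally show "(\<integral>s. lyapunov (x (Suc t) s) (u (Suc t) s) \<partial>M) \<le> rate * (\<integral>s. lyapunov (x t s) (u t s) \<partial>M)" .
qed

lemma integral_lyapunov_le:
  "integrable M (\<lambda>s. lyapunov (x t s) (u t s))
   \<and> (\<integral>s. lyapunov (x t s) (u t s) \<partial>M) \<le> rate ^ t * lyapunov x0 u0"
proof (induction t)
  case 0
  then show ?case by (simp add: x_0 u_0 prob_space)
next
  case (Suc t)
  then have int: "integrable M (\<lambda>s. lyapunov (x t s) (u t s))" by blast
  have "(\<integral>s. lyapunov (x (Suc t) s) (u (Suc t) s) \<partial>M) \<le> rate * (\<integral>s. lyapunov (x t s) (u t s) \<partial>M)"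
    by (rule integral_lyapunov_Suc_le(2)[OF int])
  also have "\<dots> \<le> rate * (rate ^ t * lyapunov x0 u0)"
    using Suc rate_nonneg by (intro mult_left_mono) auto
  finally show ?case
    using integral_lyapunov_Suc_le(1)[OF int] by simp
qed

lemma nn_integral_lyapunov_le:
  "(\<integral>\<^sup>+s. ennreal (lyapunov (x t s) (u t s)) \<partial>M) \<le> ennreal (rate ^ t * lyapunov x0 u0)"
proof -
  have "(\<integral>\<^sup>+s. ennreal (lyapunov (x t s) (u t s)) \<partial>M) = ennreal (\<integral>s. lyapunov (x t s) (u t s) \<partial>M)"
    using integral_lyapunov_le[of t] by (intro nn_integral_eq_integral) (simp_all add: lyapunov_nonneg)
  then show ?thesis
    using integral_lyapunov_le[of t] by (simp add: ennreal_leI)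
qed

lemma AE_lyapunov_tendsto_0: "AE s in M. (\<lambda>t. lyapunov (x t s) (u t s)) \<longlonglongrightarrow> 0"
proof (rule AE_tendsto_zero_of_summable_nn_integral[where B = "\<lambda>t. rate ^ t * lyapunov x0 u0"])
  show "(\<lambda>s. lyapunov (x t s) (u t s)) \<in> borel_measurable M" for t
    unfolding lyapunov_def by measurable
  show "summable (\<lambda>t. rate ^ t * lyapunov x0 u0)"
    using rate_nonneg rate_less_1 by (intro summable_mult2 summable_geometric) simp
qed (simp_all add: lyapunov_nonneg rate_nonneg nn_integral_lyapunov_le)

lemma AE_iterates_tendsto:
  "AE s in M. (\<lambda>t. x t s) \<longlonglongrightarrow> xs \<and> (\<lambda>t. xh t s) \<longlonglongrightarrow> xs \<and> (\<lambda>t. proj_ran K (u t s)) \<longlonglongrightarrow> us0"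
  using AE_lyapunov_tendsto_0
proof eventually_elim
  fix s assume lim: "(\<lambda>t. lyapunov (x t s) (u t s)) \<longlonglongrightarrow> 0"
  have x_lim: "(\<lambda>t. x t s) \<longlonglongrightarrow> xs"
    by (rule tendsto_of_norm_sq_le[OF lim norm_sq_le_lyapunov(1)])
  have u_lim: "(\<lambda>t. proj_ran K (u t s)) \<longlonglongrightarrow> us0"
    by (rule tendsto_of_norm_sq_le[OF lim norm_sq_le_lyapunov(2)])
  \<comment> \<open>\<open>xh\<close> depends on \<open>u\<close> only through \<open>adjoint K u = adjoint K (proj_ran K u)\<close>\<close>
  have "xh t s = x t s - \<gamma> *\<^sub>R gf (x t s) - \<gamma> *\<^sub>R adjoint K (proj_ran K (u t s))" for t
    by (simp add: xh_eq adjoint_proj_ran[OF linear_K])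
  moreover have "isCont gf xs" "isCont (adjoint K) us0"
    using continuous_on_gf continuous_on_linear[OF linear_adjoint_K, of UNIV]
    by (simp_all add: continuous_on_eq_continuous_at)
  ultimately have "(\<lambda>t. xh t s) \<longlonglongrightarrow> xs - \<gamma> *\<^sub>R gf xs - \<gamma> *\<^sub>R adjoint K us0"
    using x_lim u_lim
    by (auto intro!: tendsto_intros isCont_tendsto_compose[where g = gf] isCont_tendsto_compose[where g = "adjoint K"])
  then show "(\<lambda>t. x t s) \<longlonglongrightarrow> xs \<and> (\<lambda>t. xh t s) \<longlonglongrightarrow> xs \<and> (\<lambda>t. proj_ran K (u t s)) \<longlonglongrightarrow> us0"
    using x_lim u_lim by (simp add: optimality_condition)
qed

end

theorem theorem4:
  fixes K :: "'x::euclidean_space \<Rightarrow> 'u::euclidean_space"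
    and b :: 'u
    and f :: "'x \<Rightarrow> real" and gf :: "'x \<Rightarrow> 'x"
    and Lf muf :: real
    and M :: "'w measure"
    and x xh :: "nat \<Rightarrow> 'w \<Rightarrow> 'x"
    and u :: "nat \<Rightarrow> 'w \<Rightarrow> 'u"
    and \<rho> :: "nat \<Rightarrow> 'w \<Rightarrow> 'u"
    and x0 :: 'x and u0 :: 'u
    and \<gamma> \<tau> om om_ran \<zeta> :: real
    and xs :: 'x and us0 :: 'u
  assumes K_lin: "linear K" and K_nz: "K \<noteq> (\<lambda>_. 0)"
    and b_ran: "b \<in> range K"
    and f_grad: "\<And>y. (f has_derivative (\<lambda>h. gf y \<bullet> h)) (at y)"
    and f_convex: "convex_on UNIV f"
    and f_smooth: "\<And>y z. norm (gf y - gf z) \<le> Lf * norm (y - z)"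
    and f_strong: "convex_on UNIV (\<lambda>y. f y - muf / 2 * (norm y)\<^sup>2)"
    and mu_pos: "muf > 0"
    and gamma_pos: "\<gamma> > 0" and gamma_lt: "\<gamma> < 2 / Lf"
    and tau_pos: "\<tau> > 0"
    and om_nn: "om \<ge> 0" and om_ran_nn: "om_ran \<ge> 0"
    and zeta: "0 \<le> \<zeta>" "\<zeta> \<le> 1"
    and step: "\<gamma> * \<tau> * ((1 - \<zeta>) * (onorm K)\<^sup>2 + om_ran) \<le> 1"
    and P: "prob_space M"
    and x_init: "\<And>s. x 0 s = x0"
    and u_init: "\<And>s. u 0 s = u0"
    and xh_def: "\<And>t s. xh t s = x t s - \<gamma> *\<^sub>R gf (x t s) - \<gamma> *\<^sub>R adjoint K (u t s)"
    and u_step: "\<And>t s. u (Suc t) s = u t s + (\<tau> / (1 + om)) *\<^sub>R \<rho> t s"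
    and x_step: "\<And>t s. x (Suc t) s = xh t s
                   - (\<gamma> * (1 + om)) *\<^sub>R (adjoint K (u (Suc t) s) - adjoint K (u t s))"
    and rho_meas: "\<And>t. \<rho> t \<in> borel_measurable M"
    and rho_int: "\<And>t. integrable M (\<rho> t)"
    and rho_unbiased: "\<And>t a. AE s in M.
          real_cond_exp M (gen_filtr M x u t) (\<lambda>s. a \<bullet> \<rho> t s) s = a \<bullet> (K (xh t s) - b)"
    and rho_var: "\<And>t. AE s in M.
          nn_cond_exp M (gen_filtr M x u t)
             (\<lambda>s. ennreal ((norm (\<rho> t s - (K (xh t s) - b)))\<^sup>2)) s
          \<le> ennreal (om * (norm (K (xh t s) - b))\<^sup>2)"
    and rho_var_ran: "\<And>t. AE s in M.
          nn_cond_exp M (gen_filtr M x u t)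
             (\<lambda>s. ennreal ((norm (adjoint K (\<rho> t s - (K (xh t s) - b))))\<^sup>2)) s
          + ennreal (\<zeta> * (norm (adjoint K (K (xh t s) - b)))\<^sup>2)
          \<le> ennreal (om_ran * (norm (K (xh t s) - b))\<^sup>2)"
    and xs_feas: "K xs = b"
    and xs_opt: "\<And>y. K y = b \<Longrightarrow> f xs \<le> f y"
    and us0_ran: "us0 \<in> range K"
    and us0_opt: "\<And>v. fconj f (- adjoint K us0) + us0 \<bullet> b \<le> fconj f (- adjoint K v) + v \<bullet> b"
  shows "(let c = max ((1 - \<gamma> * muf)\<^sup>2) (max ((\<gamma> * Lf - 1)\<^sup>2)
                     (1 - \<gamma> * \<tau> * lambda_min_pos K / (1 + om)));
              \<Psi> = (\<lambda>t s. (1 / \<gamma>) * (norm (x t s - xs))\<^sup>2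
                     + ((1 + om) / \<tau>) * (norm (proj_ran K (u t s) - us0))\<^sup>2)
          in c < 1 \<and>
             (\<forall>t. (\<integral>\<^sup>+ s. ennreal (\<Psi> t s) \<partial>M)
                    \<le> ennreal (c ^ t * ((1 / \<gamma>) * (norm (x0 - xs))\<^sup>2
                          + ((1 + om) / \<tau>) * (norm (proj_ran K u0 - us0))\<^sup>2))))
         \<and> (AE s in M. (\<lambda>t. x t s) \<longlonglongrightarrow> xs)
         \<and> (AE s in M. (\<lambda>t. xh t s) \<longlonglongrightarrow> xs)
         \<and> (AE s in M. (\<lambda>t. proj_ran K (u t s)) \<longlonglongrightarrow> us0)"
proof -
  interpret randprox_lc f gf Lf muf K b \<gamma> \<tau> om om_ran \<zeta> xs us0 M x xh u \<rho> x0 u0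
    by (intro randprox_lc.intro randprox_lc_setting.intro smooth_strongly_convex.intro
        randprox_lc_setting_axioms.intro randprox_lc_axioms.intro) (fact assms)+
  show ?thesis
    unfolding Let_def rate_def[symmetric] lyapunov_def[symmetric]
    using rate_less_1 nn_integral_lyapunov_le AE_iterates_tendsto
    by (auto elim: AE_mp)
qed

end
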